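(* Let $F$ be a Ferrers diagram of semiperimeter $n+1$ and let $D=(T,(a_1,\ldots,a_n))\in\mathsf{DecEWtab}(F)$ be a decorated EW-tableau. Then $D\in\mathsf{Rec}_{\mathsf{EW}}(F)$ if and only if $a_j<\nu_j(T)$ for all $j\in[1,n]$.
   Context: Ferrers diagrams and graphs: a Ferrers diagram $F$ (English convention) of semiperimeter $n+1$ has rows and columns labeled by $0,\ldots,n$: the $n+1$ unit steps of its south-east boundary path, traversed from top-right to bottom-left, are labeled $0,\ldots,n$; a vertical step labels the row it bounds, a horizontal step the column it bounds (top row labeled $0$). $\mathsf{rows}(F)$, $\mathsf{cols}(F)$ are the label sets; $F$ has a cell in row $i$, column $j$ iff $i<j$. $G(F)$ has vertex set $\{0,\ldots,n\}$ with edges $\{i,j\}$ for $i\in\mathsf{rows}(F)$, $j\in\mathsf{cols}(F)$, $i<j$. Sandpile model on $G(F)$ with sink $0$: configurations $c\in\mathbb{N}^n$; non-sink $v$ unstable if $c_v\ge\deg(v)$; toppling sends one grain to each neighbour (grains to $0$ disappear); toppling the sink adds one grain to each neighbour of $0$. Recurrent: stable configurations obtainable from $c_v=\deg(v)-1$ by adding grains and stabilizing; $\mathsf{Rec}(G)$ their set; $\mathsf{Rec}^{\mathsf{min}}(G)$: recurrent configurations of minimal total grain count. Canonical toppling of a recurrent $c$: topple the sink ($U^{(0)}_c=\{0\}$), then alternately topple simultaneously all unstable vertices in $\mathsf{cols}(F)$ ($V^{(1)}_c$), all unstable in $\mathsf{rows}(F)$ ($U^{(1)}_c$), etc.; $\mathsf{CanonTop}(c)=(U^{(0)}_c,V^{(1)}_c,U^{(1)}_c,\ldots)$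 is an ordered partition of $\{0,\ldots,n\}$. For $c\in\mathsf{Rec}(G(F))$, $\mathsf{minrec}(c)$ is the configuration $m$ with $m_j=|\{\ell\in V^{(k)}_c: j<\ell,\ k>i\}|$ if $j\in U^{(i)}_c$ and $m_j=|\{\ell\in U^{(k)}_c: j>\ell,\ k\ge i\}|$ if $j\in V^{(i)}_c$; it is a minimal recurrent configuration. EW-tableaux: $0/1$-fillings $T$ of $F$ ($T_{ij}$ = entry in row $i$, column $j$) with top row all 1s, a 0 in every other row, and no rectangle with 0s in two diagonally opposite corners and 1s in the other two; $\mathsf{EWtab}(F)$ is their set. $\phi_{TC}(T)$ is the configuration with $c_i$ = number of 1s in row $i$ ($i\in\mathsf{rows}(F)$), $c_i$ = number of 0s in column $i$ ($i\in\mathsf{cols}(F)$); $\phi_{TC}$ is a bijection $\mathsf{EWtab}(F)\to\mathsf{Rec}^{\mathsf{min}}(G(F))$ with inverse denoted $\phi_{CT}$. $\mathsf{CanonTop}(T):=\mathsf{CanonTop}(\phi_{TC}(T))$. Decorated EW-tableaux: $\mathsf{DecEWtab}(F)$ is the set of pairs $(T,(x_1,\ldots,x_n))$ with $T\in\mathsf{EWtab}(F)$, $0\le x_i<$ (number of 0s in row $i$ of $T$) for $i\in\mathsf{rows}(F)$, and $0\le x_i<$ (number of 1s in column $i$ of $T$) for $i\in\mathsf{cols}(F)$. Define $\psi:\mathsf{Rec}(G(F))\to\mathsf{DecEWtab}(F)$ by $\psi(x)=(\phi_{CT}(\mathsf{minrec}(x)),(x_1-\mathsf{minrec}(x)_1,\ldots,x_n-\mathsf{minrec}(x)_n))$,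 and $\mathsf{Rec}_{\mathsf{EW}}(F)=\psi(\mathsf{Rec}(G(F)))$. Supplementary tableau $S=S(T)$: the $|\mathsf{rows}(F)|\times|\mathsf{cols}(F)|$ array with $S_{ij}=1$ if row label $i$ lies in an earlier block of $\mathsf{CanonTop}(T)$ than column label $j$, else $0$. An entry $x$ of $T$ at $(j,k)$ is a cornersupport entry iff there exist a row $j'\ne j$ and column $k'\ne k$ with $S_{j'k'}\ne x$ and $S_{j'k}=S_{jk'}=x$. For $j\in[1,n]$, $\nu_j(T)$ is the number of non-cornersupport 0s in row $j$ of $T$ if $j\in\mathsf{rows}(F)$, and the number of non-cornersupport 1s in column $j$ of $T$ if $j\in\mathsf{cols}(F)$. *)

theory Defs
  imports Main
begin

(* A Ferrers diagram of semiperimeter n+1 is encoded by n and the set R = rows(F)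
   of labels of vertical boundary steps; cols(F) = {0..n} - R.
   Top row is labelled 0, and the last (bottom-left) step is horizontal. *)
definition ferrers :: "nat \<Rightarrow> nat set \<Rightarrow> bool" where
  "ferrers n R \<longleftrightarrow> 1 \<le> n \<and> R \<subseteq> {0..n} \<and> 0 \<in> R \<and> n \<notin> R"

definition cols :: "nat \<Rightarrow> nat set \<Rightarrow> nat set" where
  "cols n R = {0..n} - R"

definition cell :: "nat \<Rightarrow> nat set \<Rightarrow> nat \<Rightarrow> nat \<Rightarrow> bool" where
  "cell n R i j \<longleftrightarrow> i \<in> R \<and> j \<in> cols n R \<and> i < j"

definition adj :: "nat \<Rightarrow> nat set \<Rightarrow> nat \<Rightarrow> nat \<Rightarrow> bool" where
  "adj n R u v \<longleftrightarrow> cell n R u v \<or> cell n R v u"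

definition deg :: "nat \<Rightarrow> nat set \<Rightarrow> nat \<Rightarrow> nat" where
  "deg n R v = card {u \<in> {0..n}. adj n R v u}"

(* configurations: functions nat => nat, meaningful on {1..n}, zero elsewhere *)
definition stable :: "nat \<Rightarrow> nat set \<Rightarrow> (nat \<Rightarrow> nat) \<Rightarrow> bool" where
  "stable n R c \<longleftrightarrow> (\<forall>v\<in>{1..n}. c v < deg n R v)"

definition topple :: "nat \<Rightarrow> nat set \<Rightarrow> nat \<Rightarrow> (nat \<Rightarrow> nat) \<Rightarrow> (nat \<Rightarrow> nat)" where
  "topple n R v c = (\<lambda>u. if u = v then c u - deg n R v
                          else if u \<in> {1..n} \<and> adj n R v u then c u + 1 else c u)"

definition topple_step :: "nat \<Rightarrow> nat set \<Rightarrow> (nat \<Rightarrow> nat) \<Rightarrow> (nat \<Rightarrow> nat) \<Rightarrow> bool" where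
  "topple_step n R c c' \<longleftrightarrow> (\<exists>v\<in>{1..n}. deg n R v \<le> c v \<and> c' = topple n R v c)"

definition cmax :: "nat \<Rightarrow> nat set \<Rightarrow> nat \<Rightarrow> nat" where
  "cmax n R v = (if v \<in> {1..n} then deg n R v - 1 else 0)"

definition recurrent :: "nat \<Rightarrow> nat set \<Rightarrow> (nat \<Rightarrow> nat) \<Rightarrow> bool" where
  "recurrent n R c \<longleftrightarrow> stable n R c \<and>
     (\<exists>d. (\<forall>u. u \<notin> {1..n} \<longrightarrow> d u = 0) \<and>
          (topple_step n R)\<^sup>*\<^sup>* (\<lambda>u. cmax n R u + d u) c)"

definition Rec :: "nat \<Rightarrow> nat set \<Rightarrow> (nat \<Rightarrow> nat) set" where
  "Rec n R = {c. recurrent n R c}"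

definition Rec_min :: "nat \<Rightarrow> nat set \<Rightarrow> (nat \<Rightarrow> nat) set" where
  "Rec_min n R = {c \<in> Rec n R. \<forall>c' \<in> Rec n R. (\<Sum>v=1..n. c v) \<le> (\<Sum>v=1..n. c' v)}"

(* canonical toppling: step k yields (block_k, configuration after toppling blocks 0..k),
   block 0 = {0} (sink); odd blocks: unstable columns, even blocks >= 2: unstable rows *)
primrec canon_step :: "nat \<Rightarrow> nat set \<Rightarrow> (nat \<Rightarrow> nat) \<Rightarrow> nat \<Rightarrow> nat set \<times> (nat \<Rightarrow> int)" where
  "canon_step n R c 0 =
     ({0}, \<lambda>u. if u \<in> {1..n} then int (c u) + (if adj n R 0 u then 1 else 0) else 0)"
| "canon_step n R c (Suc k) =
     (let x = snd (canon_step n R c k);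
          B = {u \<in> {1..n}. u \<in> (if odd (Suc k) then cols n R else R) \<and> int (deg n R u) \<le> x u}
      in (B, \<lambda>u. if u \<in> {1..n}
                   then x u + int (card {v \<in> B. adj n R v u}) - (if u \<in> B then int (deg n R u) else 0)
                   else 0))"

(* the k-th block of CanonTop(c) = (U^(0), V^(1), U^(1), V^(2), ...) *)
definition canon_block :: "nat \<Rightarrow> nat set \<Rightarrow> (nat \<Rightarrow> nat) \<Rightarrow> nat \<Rightarrow> nat set" where
  "canon_block n R c k = fst (canon_step n R c k)"

definition canonU :: "nat \<Rightarrow> nat set \<Rightarrow> (nat \<Rightarrow> nat) \<Rightarrow> nat \<Rightarrow> nat set" where
  "canonU n R c i = canon_block n R c (2 * i)"

definition canonV :: "nat \<Rightarrow> nat set \<Rightarrow> (nat \<Rightarrow> nat) \<Rightarrow> nat \<Rightarrow> nat set" where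
  "canonV n R c i = (if i = 0 then {} else canon_block n R c (2 * i - 1))"

definition canon_index :: "nat \<Rightarrow> nat set \<Rightarrow> (nat \<Rightarrow> nat) \<Rightarrow> nat \<Rightarrow> nat" where
  "canon_index n R c v = (LEAST k. v \<in> canon_block n R c k)"

definition minrec :: "nat \<Rightarrow> nat set \<Rightarrow> (nat \<Rightarrow> nat) \<Rightarrow> (nat \<Rightarrow> nat)" where
  "minrec n R c = (\<lambda>j. if j \<in> {1..n} then
      (if (\<exists>i. j \<in> canonU n R c i)
       then card {l. \<exists>i k. j \<in> canonU n R c i \<and> i < k \<and> l \<in> canonV n R c k \<and> j < l}
       else card {l. \<exists>i k. j \<in> canonV n R c i \<and> i \<le> k \<and> l \<in> canonU n R c k \<and> l < j})
    else 0)"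

(* tableaux: T i j = True means entry 1 in row i, column j; False outside F *)
type_synonym tableau = "nat \<Rightarrow> nat \<Rightarrow> bool"

definition EWtab :: "nat \<Rightarrow> nat set \<Rightarrow> tableau set" where
  "EWtab n R = {T.
     (\<forall>i j. T i j \<longrightarrow> cell n R i j) \<and>
     (\<forall>j. cell n R 0 j \<longrightarrow> T 0 j) \<and>
     (\<forall>i\<in>R - {0}. \<exists>j. cell n R i j \<and> \<not> T i j) \<and>
     (\<forall>i i' j j'. i < i' \<longrightarrow> j < j' \<longrightarrow>
        cell n R i j \<longrightarrow> cell n R i j' \<longrightarrow> cell n R i' j \<longrightarrow> cell n R i' j' \<longrightarrow>
        \<not> ((\<not> T i j \<and> \<not> T i' j' \<and> T i j' \<and> T i' j) \<or>
           (T i j \<and> T i' j' \<and> \<not> T i j' \<and> \<not> T i' j)))}"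

definition row_ones :: "nat \<Rightarrow> nat set \<Rightarrow> tableau \<Rightarrow> nat \<Rightarrow> nat" where
  "row_ones n R T i = card {j. cell n R i j \<and> T i j}"
definition row_zeros :: "nat \<Rightarrow> nat set \<Rightarrow> tableau \<Rightarrow> nat \<Rightarrow> nat" where
  "row_zeros n R T i = card {j. cell n R i j \<and> \<not> T i j}"
definition col_ones :: "nat \<Rightarrow> nat set \<Rightarrow> tableau \<Rightarrow> nat \<Rightarrow> nat" where
  "col_ones n R T j = card {i. cell n R i j \<and> T i j}"
definition col_zeros :: "nat \<Rightarrow> nat set \<Rightarrow> tableau \<Rightarrow> nat \<Rightarrow> nat" where
  "col_zeros n R T j = card {i. cell n R i j \<and> \<not> T i j}"

definition phi_TC :: "nat \<Rightarrow> nat set \<Rightarrow> tableau \<Rightarrow> (nat \<Rightarrow> nat)" where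
  "phi_TC n R T = (\<lambda>i. if i \<in> {1..n} then
       (if i \<in> R then row_ones n R T i else col_zeros n R T i) else 0)"

definition phi_CT :: "nat \<Rightarrow> nat set \<Rightarrow> (nat \<Rightarrow> nat) \<Rightarrow> tableau" where
  "phi_CT n R c = (THE T. T \<in> EWtab n R \<and> phi_TC n R T = c)"

definition DecEWtab :: "nat \<Rightarrow> nat set \<Rightarrow> (tableau \<times> (nat \<Rightarrow> nat)) set" where
  "DecEWtab n R = {(T, x). T \<in> EWtab n R \<and>
      (\<forall>i. i \<notin> {1..n} \<longrightarrow> x i = 0) \<and>
      (\<forall>i\<in>{1..n}. (i \<in> R \<longrightarrow> x i < row_zeros n R T i) \<and>
                  (i \<notin> R \<longrightarrow> x i < col_ones n R T i))}"

definition psi :: "nat \<Rightarrow> nat set \<Rightarrow> (nat \<Rightarrow> nat) \<Rightarrow> tableau \<times> (nat \<Rightarrow> nat)" where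
  "psi n R x = (phi_CT n R (minrec n R x),
                \<lambda>i. if i \<in> {1..n} then x i - minrec n R x i else 0)"

definition Rec_EW :: "nat \<Rightarrow> nat set \<Rightarrow> (tableau \<times> (nat \<Rightarrow> nat)) set" where
  "Rec_EW n R = psi n R ` Rec n R"

definition supp :: "nat \<Rightarrow> nat set \<Rightarrow> tableau \<Rightarrow> nat \<Rightarrow> nat \<Rightarrow> bool" where
  "supp n R T i j \<longleftrightarrow>
     canon_index n R (phi_TC n R T) i < canon_index n R (phi_TC n R T) j"

definition cornersupport :: "nat \<Rightarrow> nat set \<Rightarrow> tableau \<Rightarrow> nat \<Rightarrow> nat \<Rightarrow> bool" where
  "cornersupport n R T j k \<longleftrightarrow>
     (\<exists>j'\<in>R. \<exists>k'\<in>cols n R. j' \<noteq> j \<and> k' \<noteq> k \<and>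
        supp n R T j' k' \<noteq> T j k \<and> supp n R T j' k = T j k \<and> supp n R T j k' = T j k)"

definition nu :: "nat \<Rightarrow> nat set \<Rightarrow> tableau \<Rightarrow> nat \<Rightarrow> nat" where
  "nu n R T j = (if j \<in> R
     then card {k. cell n R j k \<and> \<not> T j k \<and> \<not> cornersupport n R T j k}
     else card {i. cell n R i j \<and> T i j \<and> \<not> cornersupport n R T i j})"

end

theory Submission
  imports Defs
begin

text \<open>The canonical toppling assigns to each vertex the index of the block in which it
  topples, its level. For a recurrent configuration \<open>c\<close> every vertex topples (Dhar's
  burning test); rows then lie at even and columns at odd levels, and \<open>c v\<close> lies between the
  number \<open>a v\<close> of neighbours above \<open>v\<close> and \<open>a v\<close> plus the number of neighbours exactly one
  level below \<open>v\<close>. Conversely every configuration in such a range is recurrent with these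
  levels. Hence \<open>minrec c = a\<close>, whose EW-tableau has a \<open>1\<close> in cell \<open>(i, j)\<close> iff \<open>i\<close> has a
  smaller level than \<open>j\<close>. In such a tableau an entry is a cornersupport entry iff the levels
  of its row and column differ by at least three, so \<open>\<nu>\<^sub>j\<close> counts the neighbours exactly one
  level below \<open>j\<close>: precisely the range of the decoration \<open>c - a\<close>.\<close>

lemma card_filter_le_remove:
  assumes "finite S"
  shows "card {w \<in> S. P w} \<le> card {w \<in> S - {a}. P w} + (if P a then 1 else 0)"
proof -
  have "{w \<in> S. P w} \<subseteq> insert a {w \<in> S - {a}. P w}" by auto
  then have "card {w \<in> S. P w} \<le> card (insert a {w \<in> S - {a}. P w})"
    using assms by (intro card_mono) auto
  moreover have "\<not> P a \<Longrightarrow> {w \<in> S. P w} = {w \<in> S - {a}. P w}" by auto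
  ultimately show ?thesis using assms by (auto simp: card_insert_if)
qed

locale ferrers_graph =
  fixes n :: nat and R :: "nat set"
  assumes ferrers: "ferrers n R"
begin

lemma zero_in_R: "0 \<in> R" and R_subset: "R \<subseteq> {0..n}" and n_notin_R: "n \<notin> R"
  using ferrers by (auto simp: ferrers_def)

lemma mem_cols_iff: "v \<in> cols n R \<longleftrightarrow> v \<le> n \<and> v \<notin> R"
  by (auto simp: cols_def)

lemma cell_iff: "cell n R i j \<longleftrightarrow> i \<in> R \<and> j \<le> n \<and> j \<notin> R \<and> i < j"
  by (auto simp: cell_def cols_def)

lemma adj_commute: "adj n R u v \<longleftrightarrow> adj n R v u"
  by (auto simp: adj_def)

lemma adjD: "adj n R u v \<Longrightarrow> u \<le> n \<and> v \<le> n \<and> u \<noteq> v \<and> (u \<in> R \<longleftrightarrow> v \<notin> R)"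
  using R_subset by (auto simp: adj_def cell_iff)

lemma adj_zero_iff: "adj n R 0 v \<longleftrightarrow> v \<in> {1..n} \<and> v \<notin> R"
  using zero_in_R by (auto simp: adj_def cell_iff)

lemma adj_row_iff: "u \<in> R \<Longrightarrow> adj n R u v \<longleftrightarrow> cell n R u v"
  by (auto simp: adj_def cell_iff)

lemma adj_col_iff: "u \<notin> R \<Longrightarrow> adj n R u v \<longleftrightarrow> cell n R v u"
  by (auto simp: adj_def cell_iff)

definition nbrs :: "nat \<Rightarrow> nat set" where
  "nbrs v = {u \<in> {0..n}. adj n R v u}"

lemma finite_nbrs [simp]: "finite (nbrs v)"
  by (simp add: nbrs_def)

lemma deg_eq_card_nbrs: "deg n R v = card (nbrs v)"
  by (simp add: deg_def nbrs_def)

lemma deg_le_n: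
  assumes "v \<le> n"
  shows "deg n R v \<le> n"
proof -
  have "nbrs v \<subseteq> {0..n} - {v}" using adjD by (auto simp: nbrs_def)
  then have "card (nbrs v) \<le> card ({0..n} - {v})" by (intro card_mono) auto
  with assms show ?thesis by (simp add: deg_eq_card_nbrs)
qed

lemma card_nbrs_le_deg: "card {u \<in> {0..n}. adj n R v u \<and> P u} \<le> deg n R v"
  unfolding deg_eq_card_nbrs nbrs_def by (rule card_mono) auto

lemma nbrs_row: "i \<in> R \<Longrightarrow> nbrs i = {j. cell n R i j}"
  by (auto simp: nbrs_def adj_row_iff cell_iff)

lemma nbrs_col: "j \<notin> R \<Longrightarrow> nbrs j = {i. cell n R i j}"
  using R_subset by (auto simp: nbrs_def adj_col_iff cell_iff)

lemma finite_row_cells [simp]: "finite {j. cell n R i j \<and> P j}"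
  by (rule finite_subset[of _ "{0..n}"]) (auto simp: cell_iff)

lemma finite_col_cells [simp]: "finite {i. cell n R i j \<and> P i}"
  by (rule finite_subset[of _ "{0..n}"]) (auto simp: cell_iff)

lemma deg_row: "i \<in> R \<Longrightarrow> deg n R i = row_ones n R T i + row_zeros n R T i"
  unfolding deg_eq_card_nbrs nbrs_row row_ones_def row_zeros_def
  by (subst card_Un_disjoint[symmetric]) (auto intro: arg_cong[where f = card])

lemma deg_col: "j \<notin> R \<Longrightarrow> deg n R j = col_ones n R T j + col_zeros n R T j"
  unfolding deg_eq_card_nbrs nbrs_col col_ones_def col_zeros_def
  by (subst card_Un_disjoint[symmetric]) (auto intro: arg_cong[where f = card])

section \<open>Canonical toppling\<close>

definition load :: "(nat \<Rightarrow> nat) \<Rightarrow> nat \<Rightarrow> nat \<Rightarrow> int" where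
  "load c k = snd (canon_step n R c k)"

definition toppled_upto :: "(nat \<Rightarrow> nat) \<Rightarrow> nat \<Rightarrow> nat set" where
  "toppled_upto c k = (\<Union>i\<le>k. canon_block n R c i)"

definition toppled :: "(nat \<Rightarrow> nat) \<Rightarrow> nat set" where
  "toppled c = (\<Union>k. canon_block n R c k)"

lemma canon_block_0: "canon_block n R c 0 = {0}"
  by (simp add: canon_block_def)

lemma load_0: "load c 0 u = (if u \<in> {1..n} then int (c u) + (if adj n R 0 u then 1 else 0) else 0)"
  by (simp add: load_def)

lemma canon_block_Suc:
  "canon_block n R c (Suc k) =
     {u \<in> {1..n}. u \<in> (if odd (Suc k) then cols n R else R) \<and> int (deg n R u) \<le> load c k u}"
  by (simp add: canon_block_def load_def Let_def)

lemma load_Suc: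
  "load c (Suc k) u = (if u \<in> {1..n}
     then load c k u + int (card {v \<in> canon_block n R c (Suc k). adj n R v u})
          - (if u \<in> canon_block n R c (Suc k) then int (deg n R u) else 0)
     else 0)"
  by (simp add: canon_block_def load_def Let_def)

lemma canon_block_SucD: "u \<in> canon_block n R c (Suc k) \<Longrightarrow> u \<in> {1..n} \<and> (u \<in> R \<longleftrightarrow> even (Suc k))"
  unfolding canon_block_Suc by (auto simp: mem_cols_iff split: if_splits)

lemma mem_canon_block_Suc_iff:
  assumes "u \<in> {1..n}" "u \<in> R \<longleftrightarrow> even (Suc k)"
  shows "u \<in> canon_block n R c (Suc k) \<longleftrightarrow> int (deg n R u) \<le> load c k u"
  using assms unfolding canon_block_Suc by (auto simp: mem_cols_iff)

lemma canon_block_subset: "canon_block n R c k \<subseteq> {0..n}"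
  by (cases k) (auto simp: canon_block_0 dest: canon_block_SucD)

lemma toppled_upto_0: "toppled_upto c 0 = {0}"
  by (simp add: toppled_upto_def canon_block_0)

lemma toppled_upto_Suc: "toppled_upto c (Suc k) = toppled_upto c k \<union> canon_block n R c (Suc k)"
  by (auto simp: toppled_upto_def le_Suc_eq)

lemma toppled_upto_mono: "i \<le> k \<Longrightarrow> toppled_upto c i \<subseteq> toppled_upto c k"
  unfolding toppled_upto_def by (intro UN_mono) auto

lemma toppled_upto_subset_toppled: "toppled_upto c k \<subseteq> toppled c"
  by (auto simp: toppled_upto_def toppled_def)

lemma toppled_upto_subset: "toppled_upto c k \<subseteq> {0..n}"
  using canon_block_subset by (auto simp: toppled_upto_def)

lemma toppled_subset: "toppled c \<subseteq> {0..n}"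
  using canon_block_subset by (auto simp: toppled_def)

lemma zero_in_toppled: "0 \<in> toppled c"
  using canon_block_0 by (auto simp: toppled_def)

lemma canon_block_Suc_disjoint_if_load:
  assumes st: "stable n R c"
    and load: "\<And>v. v \<in> {1..n} \<Longrightarrow> v \<in> toppled_upto c k \<Longrightarrow>
      load c k v = int (c v) + int (card {w \<in> toppled_upto c k. adj n R v w}) - int (deg n R v)"
  shows "canon_block n R c (Suc k) \<inter> toppled_upto c k = {}"
proof (rule ccontr)
  assume "canon_block n R c (Suc k) \<inter> toppled_upto c k \<noteq> {}"
  then obtain v where vB: "v \<in> canon_block n R c (Suc k)" and vT: "v \<in> toppled_upto c k" by blast
  have v: "v \<in> {1..n}" and le: "int (deg n R v) \<le> load c k v"
    using vB unfolding canon_block_Suc by auto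
  have "card {w \<in> toppled_upto c k. adj n R v w} \<le> deg n R v"
    unfolding deg_eq_card_nbrs nbrs_def using toppled_upto_subset[of c k] by (intro card_mono) auto
  moreover have "c v < deg n R v" using st v by (simp add: stable_def)
  ultimately show False using le load[OF v vT] by simp
qed

lemma load_eq:
  assumes st: "stable n R c" and u: "u \<in> {1..n}"
  shows "load c k u = int (c u) + int (card {w \<in> toppled_upto c k. adj n R u w})
           - (if u \<in> toppled_upto c k then int (deg n R u) else 0)"
  using u
proof (induction k arbitrary: u)
  case 0
  have "{w \<in> toppled_upto c 0. adj n R u w} = (if adj n R 0 u then {0} else {})"
    using adj_commute by (auto simp: toppled_upto_0)
  with 0 show ?case by (simp add: load_0 toppled_upto_0)
next
  case (Suc k)
  let ?B = "canon_block n R c (Suc k)"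
  have disj: "?B \<inter> toppled_upto c k = {}"
    by (rule canon_block_Suc_disjoint_if_load[OF st]) (simp add: Suc.IH)
  have split: "{w \<in> toppled_upto c (Suc k). adj n R u w}
      = {w \<in> toppled_upto c k. adj n R u w} \<union> {v \<in> ?B. adj n R v u}"
    by (auto simp: toppled_upto_Suc adj_commute)
  have "card {w \<in> toppled_upto c (Suc k). adj n R u w}
      = card {w \<in> toppled_upto c k. adj n R u w} + card {v \<in> ?B. adj n R v u}"
    unfolding split using disj finite_subset[OF toppled_upto_subset] finite_subset[OF canon_block_subset]
    by (intro card_Un_disjoint) auto
  with Suc.prems Suc.IH[OF Suc.prems] disj show ?case
    by (auto simp: load_Suc toppled_upto_Suc)
qed

lemma canon_block_Suc_disjoint:
  assumes st: "stable n R c"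
  shows "canon_block n R c (Suc k) \<inter> toppled_upto c k = {}"
  by (rule canon_block_Suc_disjoint_if_load[OF st]) (simp add: load_eq[OF st])

lemma canon_block_unique:
  assumes st: "stable n R c" and "v \<in> canon_block n R c i" "v \<in> canon_block n R c j"
  shows "i = j"
proof -
  have False if "i' < j'" "v \<in> canon_block n R c i'" "v \<in> canon_block n R c j'" for i' j'
  proof -
    obtain k where k: "j' = Suc k" "i' \<le> k" using \<open>i' < j'\<close> by (cases j') auto
    with that have "v \<in> canon_block n R c (Suc k) \<inter> toppled_upto c k"
      by (auto simp: toppled_upto_def)
    with canon_block_Suc_disjoint[OF st] show False by blast
  qed
  with assms show ?thesis by (metis linorder_neqE_nat)
qed

lemma toppled_eq_toppled_upto: "\<exists>K. toppled c = toppled_upto c K"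
proof -
  obtain f where f: "\<forall>v\<in>toppled c. v \<in> canon_block n R c (f v)"
    using bchoice[of "toppled c" "\<lambda>v k. v \<in> canon_block n R c k"] by (auto simp: toppled_def)
  have "finite (toppled c)" using toppled_subset finite_subset by blast
  then have "toppled c \<subseteq> toppled_upto c (Max (f ` toppled c))"
    using f by (fastforce simp: toppled_upto_def)
  with toppled_upto_subset_toppled show ?thesis by blast
qed

lemma not_toppled_below_deg:
  assumes st: "stable n R c" and v: "v \<in> {1..n}" "v \<notin> toppled c"
  shows "c v + card {w \<in> toppled c. adj n R v w} < deg n R v"
proof -
  obtain K where K: "toppled c = toppled_upto c K" using toppled_eq_toppled_upto by blast
  define k where "k = (if v \<in> R \<longleftrightarrow> even (Suc K) then K else Suc K)"
  have "K \<le> k" and parity: "v \<in> R \<longleftrightarrow> even (Suc k)" by (auto simp: k_def)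
  then have Tk: "toppled_upto c k = toppled c"
    using toppled_upto_mono toppled_upto_subset_toppled K by blast
  have "v \<notin> canon_block n R c (Suc k)" using v(2) by (auto simp: toppled_def)
  then have "\<not> int (deg n R v) \<le> load c k v" using mem_canon_block_Suc_iff[OF v(1) parity] by simp
  with load_eq[OF st v(1), of k] Tk v(2) show ?thesis by simp
qed

section \<open>Recurrent configurations topple completely\<close>

definition no_forbidden_subconfig :: "(nat \<Rightarrow> nat) \<Rightarrow> bool" where
  "no_forbidden_subconfig c \<longleftrightarrow>
     (\<forall>S. S \<subseteq> {1..n} \<longrightarrow> S \<noteq> {} \<longrightarrow> (\<exists>v\<in>S. card {w \<in> S. adj n R v w} \<le> c v))"

text \<open>The largest vertex of \<open>S\<close> has a neighbour outside \<open>S\<close>: the sink if it labels a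
  column, the last column \<open>n\<close> if it labels a row.\<close>

lemma no_forbidden_subconfig_above_cmax:
  assumes "\<forall>v\<in>{1..n}. cmax n R v \<le> c v"
  shows "no_forbidden_subconfig c"
  unfolding no_forbidden_subconfig_def
proof (intro allI impI)
  fix S assume S: "S \<subseteq> {1..n}" "S \<noteq> {}"
  have "finite S" using S(1) finite_subset by blast
  define v where "v = Max S"
  have v: "v \<in> S" and v_max: "\<And>w. w \<in> S \<Longrightarrow> w \<le> v"
    using \<open>finite S\<close> S(2) by (auto simp: v_def)
  with S(1) have v: "v \<in> S" "v \<in> {1..n}" by auto
  obtain w where w: "w \<in> nbrs v" "w \<notin> S"
  proof (cases "v \<in> R")
    case True
    with n_notin_R have "v \<noteq> n" by auto
    with True n_notin_R v(2) have "adj n R v n" by (auto simp: adj_def cell_iff)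
    moreover have "n \<notin> S" using v_max True n_notin_R v(2) by force
    ultimately show ?thesis using that by (auto simp: nbrs_def)
  next
    case False
    with v(2) have "adj n R v 0" using adj_zero_iff adj_commute by blast
    with S(1) show ?thesis by (intro that[of 0]) (auto simp: nbrs_def)
  qed
  with S(1) have "{u \<in> S. adj n R v u} \<subset> nbrs v" by (auto simp: nbrs_def)
  then have "card {u \<in> S. adj n R v u} < deg n R v"
    unfolding deg_eq_card_nbrs by (intro psubset_card_mono) auto
  with assms v(2) have "card {u \<in> S. adj n R v u} \<le> c v" by (force simp: cmax_def)
  with v(1) show "\<exists>v\<in>S. card {w \<in> S. adj n R v w} \<le> c v" by blast
qed

lemma no_forbidden_subconfig_topple_step:
  assumes nf: "no_forbidden_subconfig c" and step: "topple_step n R c c'"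
  shows "no_forbidden_subconfig c'"
  unfolding no_forbidden_subconfig_def
proof (intro allI impI)
  fix S assume S: "S \<subseteq> {1..n}" "S \<noteq> {}"
  obtain v0 where v0: "v0 \<in> {1..n}" and c': "c' = topple n R v0 c"
    using step unfolding topple_step_def by blast
  have c'_eq: "c' u = c u + (if adj n R v0 u then 1 else 0)" if "u \<in> {1..n}" "u \<noteq> v0" for u
    using that by (simp add: c' topple_def)
  have fin: "finite S" using S(1) finite_subset by blast
  consider "v0 \<notin> S" | "S = {v0}" | "v0 \<in> S" "S - {v0} \<noteq> {}" by blast
  then show "\<exists>v\<in>S. card {w \<in> S. adj n R v w} \<le> c' v"
  proof cases
    case 1
    with nf S obtain v where v: "v \<in> S" "card {w \<in> S. adj n R v w} \<le> c v"
      unfolding no_forbidden_subconfig_def by blast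
    moreover have "v \<in> {1..n}" "v \<noteq> v0" using v(1) 1 S(1) by auto
    then have "c v \<le> c' v" using c'_eq by simp
    ultimately show ?thesis by (meson order_trans)
  next
    case 2
    have "\<not> adj n R v0 v0" using adjD by blast
    with 2 have "{w \<in> S. adj n R v0 w} = {}" by auto
    moreover have "v0 \<in> S" using 2 by simp
    ultimately show ?thesis by (metis card.empty le0)
  next
    case 3
    moreover have "S - {v0} \<subseteq> {1..n}" using S(1) by blast
    ultimately obtain u where u: "u \<in> S - {v0}" "card {w \<in> S - {v0}. adj n R u w} \<le> c u"
      using nf unfolding no_forbidden_subconfig_def by blast
    have "card {w \<in> S. adj n R u w} \<le> card {w \<in> S - {v0}. adj n R u w} + (if adj n R u v0 then 1 else 0)"
      by (rule card_filter_le_remove[OF fin])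
    moreover have "c' u = c u + (if adj n R u v0 then 1 else 0)"
      using u S(1) c'_eq[of u] adj_commute[of u v0] by auto
    ultimately have "card {w \<in> S. adj n R u w} \<le> c' u" using u(2) by linarith
    with u show ?thesis by blast
  qed
qed

lemma no_forbidden_subconfig_topple_steps:
  "(topple_step n R)\<^sup>*\<^sup>* c c' \<Longrightarrow> no_forbidden_subconfig c \<Longrightarrow> no_forbidden_subconfig c'"
  by (induction rule: rtranclp_induct) (auto intro: no_forbidden_subconfig_topple_step)

text \<open>Dhar's burning test: the untoppled non-sink vertices would form a forbidden
  subconfiguration.\<close>

lemma no_forbidden_subconfig_toppled:
  assumes st: "stable n R c" and nf: "no_forbidden_subconfig c"
  shows "toppled c = {0..n}"
proof (rule ccontr)
  assume "toppled c \<noteq> {0..n}"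
  define S where "S = {1..n} - toppled c"
  have "S \<noteq> {}"
  proof
    assume "S = {}"
    then have "{1..n} \<subseteq> toppled c" by (auto simp: S_def)
    moreover have "{0..n} = insert 0 {1..n}" by auto
    ultimately have "{0..n} \<subseteq> toppled c" using zero_in_toppled[of c] by simp
    with toppled_subset \<open>toppled c \<noteq> {0..n}\<close> show False by blast
  qed
  then obtain v where v: "v \<in> S" "card {w \<in> S. adj n R v w} \<le> c v"
    using nf unfolding no_forbidden_subconfig_def S_def by blast
  have v1: "v \<in> {1..n}" "v \<notin> toppled c" using v(1) by (auto simp: S_def)
  have "nbrs v = {w \<in> S. adj n R v w} \<union> {w \<in> toppled c. adj n R v w}"
  proof (intro equalityI subsetI)
    fix w assume "w \<in> nbrs v"
    then show "w \<in> {w \<in> S. adj n R v w} \<union> {w \<in> toppled c. adj n R v w}"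
      using zero_in_toppled[of c] by (cases "w = 0") (auto simp: nbrs_def S_def)
  qed (use toppled_subset[of c] in \<open>auto simp: nbrs_def S_def\<close>)
  moreover have "finite (toppled c)" using toppled_subset finite_subset by blast
  ultimately have "deg n R v = card {w \<in> S. adj n R v w} + card {w \<in> toppled c. adj n R v w}"
    unfolding deg_eq_card_nbrs by (simp add: card_Un_disjoint S_def disjoint_iff)
  with not_toppled_below_deg[OF st v1] v(2) show False by simp
qed

lemma recurrent_toppled:
  assumes "recurrent n R c"
  shows "toppled c = {0..n}"
proof -
  obtain d where "(topple_step n R)\<^sup>*\<^sup>* (\<lambda>u. cmax n R u + d u) c"
    using assms by (auto simp: recurrent_def)
  moreover have "no_forbidden_subconfig (\<lambda>u. cmax n R u + d u)"
    by (rule no_forbidden_subconfig_above_cmax) simp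
  ultimately have "no_forbidden_subconfig c" by (rule no_forbidden_subconfig_topple_steps)
  moreover have "stable n R c" using assms by (simp add: recurrent_def)
  ultimately show ?thesis using no_forbidden_subconfig_toppled by blast
qed

section \<open>Levellings\<close>

abbreviation level :: "(nat \<Rightarrow> nat) \<Rightarrow> nat \<Rightarrow> nat" where
  "level c \<equiv> canon_index n R c"

definition nbrs_above :: "(nat \<Rightarrow> nat) \<Rightarrow> nat \<Rightarrow> nat" where
  "nbrs_above l v = card {u \<in> {0..n}. adj n R v u \<and> l v < l u}"

definition nbrs_below :: "(nat \<Rightarrow> nat) \<Rightarrow> nat \<Rightarrow> nat" where
  "nbrs_below l v = card {u \<in> {0..n}. adj n R v u \<and> l u < l v}"

definition nbrs_just_below :: "(nat \<Rightarrow> nat) \<Rightarrow> nat \<Rightarrow> nat" where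
  "nbrs_just_below l v = card {u \<in> {0..n}. adj n R v u \<and> Suc (l u) = l v}"

definition nbrs_far_below :: "(nat \<Rightarrow> nat) \<Rightarrow> nat \<Rightarrow> nat" where
  "nbrs_far_below l v = card {u \<in> {0..n}. adj n R v u \<and> l u + 3 \<le> l v}"

definition levelling :: "(nat \<Rightarrow> nat) \<Rightarrow> bool" where
  "levelling l \<longleftrightarrow> l 0 = 0 \<and> (\<forall>v\<in>{1..n}. 0 < l v \<and> (v \<in> R \<longleftrightarrow> even (l v)))"

text \<open>\<open>compatible l c\<close> says that in the canonical toppling of \<open>c\<close> every vertex \<open>v\<close> topples
  in block \<open>l v\<close>: the grains received from its neighbours below bring it to its degree,
  those received from its neighbours at least three levels below do not.\<close>

definition compatible :: "(nat \<Rightarrow> nat) \<Rightarrow> (nat \<Rightarrow> nat) \<Rightarrow> bool" where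
  "compatible l c \<longleftrightarrow> levelling l \<and>
     (\<forall>v\<in>{1..n}. nbrs_above l v \<le> c v \<and> c v < nbrs_above l v + nbrs_just_below l v)"

lemma levelling_parity: "levelling l \<Longrightarrow> u \<le> n \<Longrightarrow> u \<in> R \<longleftrightarrow> even (l u)"
  using zero_in_R by (cases "u = 0") (auto simp: levelling_def)

lemma levelling_eq_0_iff: "levelling l \<Longrightarrow> u \<le> n \<Longrightarrow> l u = 0 \<longleftrightarrow> u = 0"
  by (cases "u = 0") (auto simp: levelling_def)

lemma levelling_adj_parity: "levelling l \<Longrightarrow> adj n R v u \<Longrightarrow> even (l u) \<longleftrightarrow> odd (l v)"
  using adjD[of v u] levelling_parity[of l u] levelling_parity[of l v] by auto

lemma levelling_adj_neq: "levelling l \<Longrightarrow> adj n R v u \<Longrightarrow> l u \<noteq> l v"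
  using levelling_adj_parity by fastforce

lemma deg_eq_nbrs_below_above:
  assumes "levelling l"
  shows "deg n R v = nbrs_below l v + nbrs_above l v"
proof -
  have "nbrs v = {u \<in> {0..n}. adj n R v u \<and> l u < l v} \<union> {u \<in> {0..n}. adj n R v u \<and> l v < l u}"
    using levelling_adj_neq[OF assms, of v] by (auto simp: nbrs_def nat_neq_iff)
  then show ?thesis
    unfolding deg_eq_card_nbrs nbrs_below_def nbrs_above_def by (simp add: card_Un_disjoint disjoint_iff)
qed

lemma opposite_parity_gap:
  fixes a b :: nat
  shows "a < b \<Longrightarrow> even a \<longleftrightarrow> odd b \<Longrightarrow> Suc a \<noteq> b \<Longrightarrow> a + 3 \<le> b"
  by presburger

lemma nbrs_below_split:
  assumes "levelling l"
  shows "nbrs_below l v = nbrs_far_below l v + nbrs_just_below l v"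
proof -
  have "{u \<in> {0..n}. adj n R v u \<and> l u < l v}
      = {u \<in> {0..n}. adj n R v u \<and> l u + 3 \<le> l v} \<union> {u \<in> {0..n}. adj n R v u \<and> Suc (l u) = l v}"
    using levelling_adj_parity[OF assms, of v] opposite_parity_gap by auto
  then show ?thesis unfolding nbrs_below_def nbrs_far_below_def nbrs_just_below_def
    by (simp add: card_Un_disjoint disjoint_iff)
qed

lemma deg_split:
  assumes "levelling l"
  shows "deg n R v = nbrs_far_below l v + nbrs_just_below l v + nbrs_above l v"
  using deg_eq_nbrs_below_above[OF assms] nbrs_below_split[OF assms] by simp

lemma compatible_stable:
  assumes "compatible l c"
  shows "stable n R c"
  unfolding stable_def
proof
  fix v assume "v \<in> {1..n}"
  with assms have "c v < nbrs_above l v + nbrs_just_below l v" "levelling l"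
    by (auto simp: compatible_def)
  then show "c v < deg n R v" by (simp add: deg_split)
qed

lemma compatibleD:
  assumes "compatible l c"
  shows "levelling l" "\<forall>v\<in>{1..n}. 0 < nbrs_just_below l v"
  using assms unfolding compatible_def by fastforce+

lemma level_eqI:
  assumes "stable n R c" "v \<in> canon_block n R c k"
  shows "level c v = k"
  unfolding canon_index_def
  by (rule Least_equality) (use assms canon_block_unique in auto)

lemma level_mem_canon_block:
  assumes "toppled c = {0..n}" "v \<le> n"
  shows "v \<in> canon_block n R c (level c v)"
proof -
  from assms have "v \<in> toppled c" by simp
  then obtain k where "v \<in> canon_block n R c k" by (auto simp: toppled_def)
  then show ?thesis unfolding canon_index_def by (rule LeastI)
qed

lemma toppled_upto_eq_level_set:
  assumes "stable n R c" "toppled c = {0..n}"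
  shows "toppled_upto c k = {v \<in> {0..n}. level c v \<le> k}"
  using assms level_mem_canon_block[OF assms(2)] canon_block_subset
  by (fastforce simp: toppled_upto_def dest: level_eqI)

lemma levelling_level:
  assumes st: "stable n R c" and all: "toppled c = {0..n}"
  shows "levelling (level c)"
  unfolding levelling_def
proof (intro conjI ballI)
  show "level c 0 = 0" using level_eqI[OF st] canon_block_0 by simp
next
  fix v assume v: "v \<in> {1..n}"
  then have vb: "v \<in> canon_block n R c (level c v)" using level_mem_canon_block[OF all] by simp
  show "0 < level c v"
    using vb v canon_block_0 by (cases "level c v") auto
  then obtain k where "level c v = Suc k" using gr0_implies_Suc by blast
  with vb show "v \<in> R \<longleftrightarrow> even (level c v)" using canon_block_SucD by simp
qed

lemma load_below_level:
  assumes st: "stable n R c" and all: "toppled c = {0..n}"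
    and v: "v \<in> {1..n}" and k: "k < level c v"
  shows "load c k v = int (c v) + int (card {w \<in> {0..n}. adj n R v w \<and> level c w \<le> k})"
proof -
  have "{w \<in> toppled_upto c k. adj n R v w} = {w \<in> {0..n}. adj n R v w \<and> level c w \<le> k}"
    using toppled_upto_eq_level_set[OF st all] by auto
  with load_eq[OF st v, of k] k v show ?thesis
    by (simp add: toppled_upto_eq_level_set[OF st all])
qed

lemma all_toppled_nbrs_above_le:
  assumes st: "stable n R c" and all: "toppled c = {0..n}" and v: "v \<in> {1..n}"
  shows "nbrs_above (level c) v \<le> c v"
proof -
  let ?l = "level c"
  have lv: "levelling ?l" by (rule levelling_level[OF st all])
  have "0 < ?l v" using lv v by (simp add: levelling_def)
  then obtain k where k: "?l v = Suc k" using gr0_implies_Suc by blast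
  have parity: "v \<in> R \<longleftrightarrow> even (Suc k)" using lv v k by (simp add: levelling_def)
  have "v \<in> canon_block n R c (Suc k)" using level_mem_canon_block[OF all] v k by force
  then have "int (deg n R v) \<le> load c k v" using mem_canon_block_Suc_iff[OF v parity] by simp
  moreover have "{w \<in> {0..n}. adj n R v w \<and> ?l w \<le> k} = {u \<in> {0..n}. adj n R v u \<and> ?l u < ?l v}"
    using k by auto
  ultimately have "deg n R v \<le> c v + nbrs_below ?l v"
    using load_below_level[OF st all v, of k] k by (simp add: nbrs_below_def)
  then show ?thesis using deg_eq_nbrs_below_above[OF lv] by simp
qed

lemma all_toppled_nbrs_far_below_lt:
  assumes st: "stable n R c" and all: "toppled c = {0..n}" and v: "v \<in> {1..n}"
  shows "c v + nbrs_far_below (level c) v < deg n R v"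
proof (cases "3 \<le> level c v")
  case True
  let ?l = "level c"
  define k where "k = ?l v - 3"
  have "v \<notin> canon_block n R c (Suc k)"
  proof
    assume "v \<in> canon_block n R c (Suc k)"
    then have "?l v = Suc k" by (rule level_eqI[OF st])
    with True k_def show False by linarith
  qed
  moreover have "v \<in> R \<longleftrightarrow> even (Suc k)"
    using levelling_level[OF st all] v True by (simp add: levelling_def k_def)
  ultimately have "load c k v < int (deg n R v)" using mem_canon_block_Suc_iff[OF v] by simp
  moreover have "{w \<in> {0..n}. adj n R v w \<and> ?l w \<le> k} = {u \<in> {0..n}. adj n R v u \<and> ?l u + 3 \<le> ?l v}"
    using True by (auto simp: k_def)
  ultimately show ?thesis
    using load_below_level[OF st all v, of k] True by (simp add: k_def nbrs_far_below_def)
next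
  case False
  then have "nbrs_far_below (level c) v = 0" by (simp add: nbrs_far_below_def)
  moreover have "c v < deg n R v" using st v by (simp add: stable_def)
  ultimately show ?thesis by linarith
qed

lemma all_toppled_compatible:
  assumes st: "stable n R c" and all: "toppled c = {0..n}"
  shows "compatible (level c) c"
  using levelling_level[OF st all] all_toppled_nbrs_above_le[OF st all]
    all_toppled_nbrs_far_below_lt[OF st all] deg_split[OF levelling_level[OF st all]]
  unfolding compatible_def by fastforce

context
  fixes l c k
  assumes cp: "compatible l c" and top: "toppled_upto c k = {v \<in> {0..n}. l v \<le> k}"
begin

lemma canon_block_Suc_subset_level_set:
  "canon_block n R c (Suc k) \<subseteq> {v \<in> {0..n}. l v = Suc k}"
proof
  fix u assume "u \<in> canon_block n R c (Suc k)"
  then have u: "u \<in> {1..n}" "u \<in> R \<longleftrightarrow> even (Suc k)" and le: "int (deg n R u) \<le> load c k u"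
    using canon_block_SucD mem_canon_block_Suc_iff by blast+
  have lv: "levelling l" by (rule compatibleD(1)[OF cp])
  have st: "stable n R c" by (rule compatible_stable[OF cp])
  have load: "load c k u = int (c u) + int (card {w \<in> {0..n}. adj n R u w \<and> l w \<le> k})
      - (if l u \<le> k then int (deg n R u) else 0)"
    using load_eq[OF st u(1), of k] u(1) unfolding top by (auto intro!: arg_cong[where f = card])
  have bounds: "c u < nbrs_above l u + nbrs_just_below l u" "c u < deg n R u"
    using cp u(1) st by (auto simp: compatible_def stable_def)
  have "even (l u) \<longleftrightarrow> even (Suc k)" using levelling_parity[OF lv, of u] u by simp
  then have "l u \<le> k \<or> l u = Suc k \<or> k + 3 \<le> l u" by presburger
  then consider "l u \<le> k" | "l u = Suc k" | "k + 3 \<le> l u" by blast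
  then show "u \<in> {v \<in> {0..n}. l v = Suc k}"
  proof cases
    case 1
    with le load bounds(2) card_nbrs_le_deg[of u "\<lambda>w. l w \<le> k"] show ?thesis by simp
  next
    case 2
    with u show ?thesis by simp
  next
    case 3
    then have "card {w \<in> {0..n}. adj n R u w \<and> l w \<le> k} \<le> nbrs_far_below l u"
      unfolding nbrs_far_below_def by (intro card_mono) auto
    with 3 le load bounds(1) deg_split[OF lv, of u] show ?thesis by simp
  qed
qed

lemma level_set_subset_canon_block_Suc:
  "{v \<in> {0..n}. l v = Suc k} \<subseteq> canon_block n R c (Suc k)"
proof
  fix u assume "u \<in> {v \<in> {0..n}. l v = Suc k}"
  then have lu: "l u = Suc k" and "u \<le> n" by auto
  have lv: "levelling l" by (rule compatibleD(1)[OF cp])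
  with lu \<open>u \<le> n\<close> have u: "u \<in> {1..n}" "u \<in> R \<longleftrightarrow> even (Suc k)"
    using levelling_eq_0_iff levelling_parity by fastforce+
  have st: "stable n R c" by (rule compatible_stable[OF cp])
  have "{w \<in> toppled_upto c k. adj n R u w} = {w \<in> {0..n}. adj n R u w \<and> l w < l u}"
    unfolding top lu by auto
  then have "load c k u = int (c u) + int (nbrs_below l u)"
    using load_eq[OF st u(1), of k] lu unfolding top by (simp add: nbrs_below_def)
  moreover have "nbrs_above l u \<le> c u" using cp u(1) by (simp add: compatible_def)
  ultimately have "int (deg n R u) \<le> load c k u" using deg_eq_nbrs_below_above[OF lv] by simp
  then show "u \<in> canon_block n R c (Suc k)" using mem_canon_block_Suc_iff[OF u] by simp
qed

end

lemma compatible_canon_block: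
  assumes cp: "compatible l c"
  shows "canon_block n R c k = {v \<in> {0..n}. l v = k}"
proof (induction k rule: less_induct)
  case (less k)
  have lv: "levelling l" by (rule compatibleD(1)[OF cp])
  show ?case
  proof (cases k)
    case 0
    then show ?thesis using levelling_eq_0_iff[OF lv] by (auto simp: canon_block_0)
  next
    case (Suc k')
    with less.IH have top: "toppled_upto c k' = {v \<in> {0..n}. l v \<le> k'}"
      by (auto simp: toppled_upto_def)
    show ?thesis unfolding Suc
      by (intro equalityI canon_block_Suc_subset_level_set[OF cp top]
          level_set_subset_canon_block_Suc[OF cp top])
  qed
qed

lemma compatible_level_eq:
  assumes "compatible l c" "v \<le> n"
  shows "level c v = l v"
  using level_eqI[OF compatible_stable[OF assms(1)]] compatible_canon_block[OF assms(1)] assms(2)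
  by simp

section \<open>Compatible configurations are recurrent\<close>

definition topple_set :: "nat set \<Rightarrow> (nat \<Rightarrow> nat) \<Rightarrow> nat \<Rightarrow> nat" where
  "topple_set A x = (\<lambda>u. if u \<in> {1..n}
     then x u + card {w \<in> A. adj n R w u} - (if u \<in> A then deg n R u else 0) else x u)"

lemma topple_set_insert:
  assumes A: "finite A" "a \<notin> A" "a \<in> {1..n}" and indep: "\<forall>w\<in>insert a A. \<not> adj n R a w"
    and legal: "\<forall>u\<in>insert a A. deg n R u \<le> x u"
  shows "topple n R a (topple_set A x) = topple_set (insert a A) x"
proof
  fix u
  have card_ins: "card {w \<in> insert a A. adj n R w u} = card {w \<in> A. adj n R w u} + (if adj n R a u then 1 else 0)"
  proof (cases "adj n R a u")
    case True
    then have "{w \<in> insert a A. adj n R w u} = insert a {w \<in> A. adj n R w u}" by auto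
    with True A show ?thesis by simp
  next
    case False
    then have "{w \<in> insert a A. adj n R w u} = {w \<in> A. adj n R w u}" by auto
    with False show ?thesis by simp
  qed
  have no_nbr: "{w \<in> insert a A. adj n R w a} = {}" using indep adj_commute by auto
  show "topple n R a (topple_set A x) u = topple_set (insert a A) x u"
  proof (cases "u = a")
    case True
    have no_nbr': "{w \<in> A. adj n R w a} = {}" using no_nbr by auto
    show ?thesis
      using A(2,3) unfolding True topple_def topple_set_def no_nbr no_nbr' by simp
  next
    case False
    have "u \<in> A \<Longrightarrow> \<not> adj n R a u" using indep by blast
    moreover have "u \<in> A \<Longrightarrow> deg n R u \<le> x u" using legal by blast
    ultimately show ?thesis using False card_ins by (auto simp: topple_def topple_set_def)
  qed
qed

lemma topple_independent_set:
  assumes "finite A" "A \<subseteq> {1..n}" "\<forall>u\<in>A. \<forall>w\<in>A. \<not> adj n R u w" "\<forall>u\<in>A. deg n R u \<le> x u"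
  shows "(topple_step n R)\<^sup>*\<^sup>* x (topple_set A x)"
  using assms
proof (induction A rule: finite_induct)
  case empty
  have "topple_set {} x = x" by (auto simp: topple_set_def)
  then show ?case by simp
next
  case (insert a A)
  have no_nbr: "{w \<in> A. adj n R w a} = {}" using insert.prems(2) adj_commute by auto
  have "topple_set A x a = x a" using insert.hyps(2) unfolding topple_set_def no_nbr by simp
  then have "deg n R a \<le> topple_set A x a" using insert.prems(3) by simp
  moreover have "topple n R a (topple_set A x) = topple_set (insert a A) x"
    using insert by (intro topple_set_insert) auto
  ultimately have "topple_step n R (topple_set A x) (topple_set (insert a A) x)"
    using insert.prems(1) unfolding topple_step_def by auto
  with insert show ?case by (auto intro: rtranclp.rtrancl_into_rtrancl)
qed

definition sink_grain :: "nat \<Rightarrow> nat" where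
  "sink_grain u = (if adj n R 0 u then 1 else 0)"

lemma card_nbrs_split_sink:
  "card {w \<in> {0..n}. adj n R u w \<and> P w}
     = (if adj n R 0 u \<and> P 0 then 1 else 0) + card {w \<in> {1..n}. adj n R w u \<and> P w}"
proof -
  have "{w \<in> {0..n}. adj n R u w \<and> P w}
      = (if adj n R 0 u \<and> P 0 then insert 0 else id) {w \<in> {1..n}. adj n R w u \<and> P w}"
    using adj_commute by (auto simp: Suc_le_eq intro!: gr0I)
  then show ?thesis by simp
qed

lemma deg_eq_sink_grain: "deg n R u = sink_grain u + card {w \<in> {1..n}. adj n R w u}"
  using card_nbrs_split_sink[of u "\<lambda>_. True"] by (simp add: deg_def sink_grain_def)

lemma nbrs_below_eq_sink_grain:
  assumes "levelling l" "u \<in> {1..n}"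
  shows "nbrs_below l u = sink_grain u + card {w \<in> {1..n}. adj n R w u \<and> l w < l u}"
  using card_nbrs_split_sink[of u "\<lambda>w. l w < l u"] assms
  by (simp add: nbrs_below_def sink_grain_def levelling_def)

definition topple_upto_level :: "(nat \<Rightarrow> nat) \<Rightarrow> (nat \<Rightarrow> nat) \<Rightarrow> nat \<Rightarrow> nat \<Rightarrow> nat" where
  "topple_upto_level l y k = (\<lambda>u. if u \<in> {1..n}
     then y u + card {w \<in> {1..n}. adj n R w u \<and> l w \<le> k} - (if l u \<le> k then deg n R u else 0)
     else y u)"

context
  fixes l y
  assumes lv: "levelling l" and above: "\<forall>u\<in>{1..n}. nbrs_above l u + sink_grain u \<le> y u"
begin

lemma topple_upto_level_legal:
  assumes u: "u \<in> {1..n}" and "l u \<le> Suc k"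
  shows "deg n R u \<le> y u + card {w \<in> {1..n}. adj n R w u \<and> l w \<le> k}"
proof -
  have "card {w \<in> {1..n}. adj n R w u \<and> l w < l u} \<le> card {w \<in> {1..n}. adj n R w u \<and> l w \<le> k}"
    using assms by (intro card_mono) auto
  with deg_eq_nbrs_below_above[OF lv, of u] nbrs_below_eq_sink_grain[OF lv u] above u
  show ?thesis by fastforce
qed

lemma topple_upto_level_Suc:
  "topple_set {w \<in> {1..n}. l w = Suc k} (topple_upto_level l y k) = topple_upto_level l y (Suc k)"
proof
  fix u
  let ?A = "{w \<in> {1..n}. l w = Suc k}"
  show "topple_set ?A (topple_upto_level l y k) u = topple_upto_level l y (Suc k) u"
  proof (cases "u \<in> {1..n}")
    case u: True
    have "{w \<in> {1..n}. adj n R w u \<and> l w \<le> Suc k}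
        = {w \<in> {1..n}. adj n R w u \<and> l w \<le> k} \<union> {w \<in> ?A. adj n R w u}"
      by auto
    then have card_Suc: "card {w \<in> {1..n}. adj n R w u \<and> l w \<le> Suc k}
        = card {w \<in> {1..n}. adj n R w u \<and> l w \<le> k} + card {w \<in> ?A. adj n R w u}"
      by (simp add: card_Un_disjoint disjoint_iff)
    consider "l u \<le> k" | "l u = Suc k" | "Suc k < l u" by linarith
    then show ?thesis
    proof cases
      case 1
      with u card_Suc topple_upto_level_legal[OF u, of k] show ?thesis
        by (simp add: topple_set_def topple_upto_level_def)
    next
      case 2
      have "{w \<in> ?A. adj n R w u} = {}" using 2 levelling_adj_neq[OF lv] adj_commute by force
      with u 2 card_Suc show ?thesis by (simp add: topple_set_def topple_upto_level_def)
    next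
      case 3
      with u card_Suc show ?thesis by (simp add: topple_set_def topple_upto_level_def)
    qed
  next
    case False
    then show ?thesis by (simp only: topple_set_def topple_upto_level_def if_not_P if_False)
  qed
qed

lemma topple_upto_level_steps: "(topple_step n R)\<^sup>*\<^sup>* y (topple_upto_level l y k)"
proof (induction k)
  case 0
  have "\<And>w. w \<in> {1..n} \<Longrightarrow> 0 < l w" using lv by (simp add: levelling_def)
  then have "topple_upto_level l y 0 = y" by (fastforce simp: topple_upto_level_def)
  then show ?case by simp
next
  case (Suc k)
  let ?A = "{w \<in> {1..n}. l w = Suc k}"
  have "(topple_step n R)\<^sup>*\<^sup>* (topple_upto_level l y k) (topple_set ?A (topple_upto_level l y k))"
  proof (rule topple_independent_set)
    show "\<forall>u\<in>?A. \<forall>w\<in>?A. \<not> adj n R u w" using levelling_adj_neq[OF lv] by force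
    show "\<forall>u\<in>?A. deg n R u \<le> topple_upto_level l y k u"
      using topple_upto_level_legal by (auto simp: topple_upto_level_def)
  qed auto
  then have "(topple_step n R)\<^sup>*\<^sup>* (topple_upto_level l y k) (topple_upto_level l y (Suc k))"
    by (simp only: topple_upto_level_Suc)
  with Suc.IH show ?case by simp
qed

text \<open>Toppling every non-sink vertex once undoes a toppling of the sink.\<close>

lemma topple_round:
  "(topple_step n R)\<^sup>*\<^sup>* y (\<lambda>u. if u \<in> {1..n} then y u - sink_grain u else y u)"
proof -
  define K where "K = Max (l ` {0..n})"
  have K: "\<And>u. u \<le> n \<Longrightarrow> l u \<le> K" unfolding K_def by (intro Max_ge) auto
  have "topple_upto_level l y K = (\<lambda>u. if u \<in> {1..n} then y u - sink_grain u else y u)"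
  proof
    fix u
    have "{w \<in> {1..n}. adj n R w u \<and> l w \<le> K} = {w \<in> {1..n}. adj n R w u}" using K by auto
    then show "topple_upto_level l y K u = (if u \<in> {1..n} then y u - sink_grain u else y u)"
      using K[of u] by (simp add: topple_upto_level_def deg_eq_sink_grain)
  qed
  with topple_upto_level_steps[of K] show ?thesis by simp
qed

end

definition plus_sink_topplings :: "nat \<Rightarrow> (nat \<Rightarrow> nat) \<Rightarrow> nat \<Rightarrow> nat" where
  "plus_sink_topplings M c u = (if u \<in> {1..n} then c u + M * sink_grain u else 0)"

lemma compatible_plus_sink_topplings_steps:
  assumes cp: "compatible l c" and zero: "\<forall>u. u \<notin> {1..n} \<longrightarrow> c u = 0"
  shows "(topple_step n R)\<^sup>*\<^sup>* (plus_sink_topplings M c) c"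
proof (induction M)
  case 0
  have "plus_sink_topplings 0 c = c" using zero by (auto simp: plus_sink_topplings_def)
  then show ?case by simp
next
  case (Suc M)
  let ?y = "plus_sink_topplings (Suc M) c"
  have "(topple_step n R)\<^sup>*\<^sup>* ?y (\<lambda>u. if u \<in> {1..n} then ?y u - sink_grain u else ?y u)"
    using cp by (intro topple_round) (auto simp: compatible_def plus_sink_topplings_def)
  moreover have "(\<lambda>u. if u \<in> {1..n} then ?y u - sink_grain u else ?y u) = plus_sink_topplings M c"
    by (auto simp: plus_sink_topplings_def)
  ultimately show ?case using Suc.IH by simp
qed

text \<open>\<open>c\<close> plus the degree of every row and \<open>2 n + 1\<close> minus the degree of every column: it
  dominates \<open>cmax\<close>, and toppling every row once turns it into \<open>c\<close> plus \<open>2 n\<close> topplings of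
  the sink.\<close>

definition start_config :: "(nat \<Rightarrow> nat) \<Rightarrow> nat \<Rightarrow> nat" where
  "start_config c u = (if u \<in> {1..n}
     then (if u \<in> R then c u + deg n R u else c u + 2 * n + 1 - deg n R u) else 0)"

lemma topple_rows_start_config:
  "topple_set {u \<in> {1..n}. u \<in> R} (start_config c) = plus_sink_topplings (2 * n) c"
proof
  fix u
  let ?rows = "{u \<in> {1..n}. u \<in> R}"
  show "topple_set ?rows (start_config c) u = plus_sink_topplings (2 * n) c u"
  proof (cases "u \<in> {1..n}")
    case u: True
    show ?thesis
    proof (cases "u \<in> R")
      case True
      then have "{w \<in> ?rows. adj n R w u} = {}" "sink_grain u = 0"
        by (auto simp: sink_grain_def adj_zero_iff dest: adjD)
      with u True show ?thesis by (simp add: topple_set_def start_config_def plus_sink_topplings_def)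
    next
      case False
      then have "{w \<in> ?rows. adj n R w u} = {w \<in> {1..n}. adj n R w u}" "sink_grain u = 1"
        using u by (auto simp: sink_grain_def adj_zero_iff dest: adjD)
      moreover have "deg n R u \<le> n" using u by (simp add: deg_le_n)
      ultimately show ?thesis using u False deg_eq_sink_grain[of u]
        by (simp add: topple_set_def start_config_def plus_sink_topplings_def)
    qed
  next
    case False
    then show ?thesis
      by (simp only: topple_set_def start_config_def plus_sink_topplings_def if_not_P if_False)
  qed
qed

lemma cmax_le_start_config: "cmax n R u \<le> start_config c u"
proof (cases "u \<in> {1..n}")
  case True
  then have "deg n R u \<le> n" by (simp add: deg_le_n)
  with True show ?thesis by (auto simp: start_config_def cmax_def)
qed (auto simp: cmax_def)

lemma cmax_steps_plus_sink_topplings: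
  "\<exists>d. (\<forall>u. u \<notin> {1..n} \<longrightarrow> d u = 0) \<and>
     (topple_step n R)\<^sup>*\<^sup>* (\<lambda>u. cmax n R u + d u) (plus_sink_topplings (2 * n) c)"
proof (intro exI conjI)
  let ?d = "\<lambda>u. start_config c u - cmax n R u"
  show "\<forall>u. u \<notin> {1..n} \<longrightarrow> ?d u = 0" by (simp add: start_config_def)
  have "(\<lambda>u. cmax n R u + ?d u) = start_config c" using cmax_le_start_config by simp
  moreover have "(topple_step n R)\<^sup>*\<^sup>* (start_config c) (topple_set {u \<in> {1..n}. u \<in> R} (start_config c))"
    by (rule topple_independent_set) (auto simp: start_config_def dest: adjD)
  ultimately show "(topple_step n R)\<^sup>*\<^sup>* (\<lambda>u. cmax n R u + ?d u) (plus_sink_topplings (2 * n) c)"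
    by (simp only: topple_rows_start_config)
qed

lemma compatible_recurrent:
  assumes cp: "compatible l c" and zero: "\<forall>u. u \<notin> {1..n} \<longrightarrow> c u = 0"
  shows "recurrent n R c"
proof -
  obtain d where "\<forall>u. u \<notin> {1..n} \<longrightarrow> d u = 0"
    "(topple_step n R)\<^sup>*\<^sup>* (\<lambda>u. cmax n R u + d u) (plus_sink_topplings (2 * n) c)"
    using cmax_steps_plus_sink_topplings by blast
  with compatible_plus_sink_topplings_steps[OF cp zero] compatible_stable[OF cp] show ?thesis
    unfolding recurrent_def by (meson rtranclp_trans)
qed

section \<open>Minimal recurrent configurations and EW-tableaux\<close>

lemma mem_canonU_iff:
  assumes "compatible l c"
  shows "j \<in> canonU n R c i \<longleftrightarrow> j \<le> n \<and> l j = 2 * i"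
  using compatible_canon_block[OF assms] by (simp add: canonU_def)

lemma mem_canonV_iff:
  assumes "compatible l c"
  shows "j \<in> canonV n R c i \<longleftrightarrow> j \<le> n \<and> l j + 1 = 2 * i"
  using compatible_canon_block[OF assms] by (auto simp: canonV_def)

lemma even_odd_levels_less:
  fixes a b :: nat
  shows "(\<exists>i k. a = 2 * i \<and> i < k \<and> b + 1 = 2 * k) \<longleftrightarrow> even a \<and> odd b \<and> a < b"
  by presburger

lemma odd_even_levels_less:
  fixes a b :: nat
  shows "(\<exists>i k. a + 1 = 2 * i \<and> i \<le> k \<and> b = 2 * k) \<longleftrightarrow> odd a \<and> even b \<and> a < b"
  by presburger

lemma minrec_compatible:
  assumes cp: "compatible l c"
  shows "minrec n R c = (\<lambda>j. if j \<in> {1..n} then nbrs_above l j else 0)"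
proof
  fix j
  have lv: "levelling l" by (rule compatibleD(1)[OF cp])
  show "minrec n R c j = (if j \<in> {1..n} then nbrs_above l j else 0)"
  proof (cases "j \<in> {1..n}")
    case j: True
    then have parity: "j \<in> R \<longleftrightarrow> even (l j)" using lv by (simp add: levelling_def)
    show ?thesis
    proof (cases "j \<in> R")
      case True
      have "\<exists>i. j \<in> canonU n R c i"
        using True parity j by (auto simp: mem_canonU_iff[OF cp] intro!: exI[of _ "l j div 2"])
      moreover have "{u. \<exists>i k. j \<in> canonU n R c i \<and> i < k \<and> u \<in> canonV n R c k \<and> j < u}
          = {u \<in> {0..n}. adj n R j u \<and> l j < l u}"
        using True parity levelling_parity[OF lv] even_odd_levels_less[of "l j"]
        by (auto simp: mem_canonU_iff[OF cp] mem_canonV_iff[OF cp] adj_row_iff cell_iff)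
      ultimately show ?thesis using j by (simp add: minrec_def nbrs_above_def)
    next
      case False
      have "\<not> (\<exists>i. j \<in> canonU n R c i)" using False parity by (auto simp: mem_canonU_iff[OF cp])
      moreover have "{u. \<exists>i k. j \<in> canonV n R c i \<and> i \<le> k \<and> u \<in> canonU n R c k \<and> u < j}
          = {u \<in> {0..n}. adj n R j u \<and> l j < l u}"
        using False parity j levelling_parity[OF lv] odd_even_levels_less[of "l j"]
        by (auto simp: mem_canonU_iff[OF cp] mem_canonV_iff[OF cp] adj_col_iff cell_iff)
      ultimately show ?thesis using j by (simp add: minrec_def nbrs_above_def)
    qed
  qed (auto simp: minrec_def)
qed

lemma nbr_just_below_exists:
  assumes "0 < nbrs_just_below l v"
  obtains u where "u \<le> n" "adj n R v u" "Suc (l u) = l v"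
proof -
  from assms have "{u \<in> {0..n}. adj n R v u \<and> Suc (l u) = l v} \<noteq> {}"
    unfolding nbrs_just_below_def by (metis card.empty less_irrefl)
  with that show ?thesis by auto
qed

definition level_tableau :: "(nat \<Rightarrow> nat) \<Rightarrow> tableau" where
  "level_tableau l = (\<lambda>i j. cell n R i j \<and> l i < l j)"

lemma level_tableau_iff: "level_tableau l i j \<longleftrightarrow> cell n R i j \<and> l i < l j"
  by (simp add: level_tableau_def)

lemma level_tableau_EWtab:
  assumes lv: "levelling l" and just_below: "\<forall>v\<in>{1..n}. 0 < nbrs_just_below l v"
  shows "level_tableau l \<in> EWtab n R"
  unfolding EWtab_def mem_Collect_eq
proof (intro conjI allI impI ballI)
  fix j assume "cell n R 0 j"
  with lv show "level_tableau l 0 j"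
    by (auto simp: level_tableau_def levelling_def cell_iff)
next
  fix i assume i: "i \<in> R - {0}"
  with R_subset have "i \<in> {1..n}" by auto
  with just_below obtain u where "u \<le> n" "adj n R i u" "Suc (l u) = l i"
    using nbr_just_below_exists by blast
  with i show "\<exists>j. cell n R i j \<and> \<not> level_tableau l i j"
    by (auto simp: level_tableau_def adj_row_iff)
qed (auto simp: level_tableau_def)

lemma phi_TC_level_tableau:
  assumes lv: "levelling l"
  shows "phi_TC n R (level_tableau l) = (\<lambda>i. if i \<in> {1..n} then nbrs_above l i else 0)"
proof
  fix i
  show "phi_TC n R (level_tableau l) i = (if i \<in> {1..n} then nbrs_above l i else 0)"
  proof (cases "i \<in> {1..n}")
    case i: True
    show ?thesis
    proof (cases "i \<in> R")
      case True
      then have "{j. cell n R i j \<and> level_tableau l i j} = {u \<in> {0..n}. adj n R i u \<and> l i < l u}"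
        by (auto simp: level_tableau_def adj_row_iff cell_iff)
      with i True show ?thesis by (simp add: phi_TC_def row_ones_def nbrs_above_def)
    next
      case False
      then have "{k. cell n R k i \<and> \<not> level_tableau l k i} = {u \<in> {0..n}. adj n R i u \<and> l i < l u}"
        using levelling_adj_neq[OF lv, of i] adjD[of i]
        by (auto simp: level_tableau_def adj_col_iff nat_neq_iff)
      with i False show ?thesis by (simp add: phi_TC_def col_zeros_def nbrs_above_def)
    qed
  qed (auto simp: phi_TC_def)
qed

lemma compatible_nbrs_above:
  assumes "levelling l" "\<forall>v\<in>{1..n}. 0 < nbrs_just_below l v"
  shows "compatible l (\<lambda>i. if i \<in> {1..n} then nbrs_above l i else 0)"
  using assms by (simp add: compatible_def)

lemma EWtab_stable:
  assumes T: "T \<in> EWtab n R"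
  shows "stable n R (phi_TC n R T)"
  unfolding stable_def
proof
  fix v assume v: "v \<in> {1..n}"
  show "phi_TC n R T v < deg n R v"
  proof (cases "v \<in> R")
    case True
    with v have "v \<in> R - {0}" by auto
    with T obtain j where "cell n R v j" "\<not> T v j" unfolding EWtab_def by blast
    then have "0 < row_zeros n R T v" by (auto simp: row_zeros_def card_gt_0_iff)
    with v True show ?thesis by (simp add: phi_TC_def deg_row[of v T])
  next
    case False
    with v zero_in_R have "cell n R 0 v" by (simp add: cell_iff)
    with T have "T 0 v" by (simp add: EWtab_def)
    with \<open>cell n R 0 v\<close> have "0 < col_ones n R T v" by (auto simp: col_ones_def card_gt_0_iff)
    with v False show ?thesis by (simp add: phi_TC_def deg_col[of v T])
  qed
qed

lemma EWtab_forbidden_pattern: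
  assumes T: "T \<in> EWtab n R" and ir: "i < r"
    and cells: "cell n R i j" "cell n R r j" "cell n R r j'" "cell n R i j'"
    and entries: "\<not> T i j" "T r j" "\<not> T r j'"
  shows "\<not> T i j'"
proof
  assume "T i j'"
  have rect: "\<forall>i i' j j'. i < i' \<longrightarrow> j < j' \<longrightarrow>
      cell n R i j \<longrightarrow> cell n R i j' \<longrightarrow> cell n R i' j \<longrightarrow> cell n R i' j' \<longrightarrow>
      \<not> ((\<not> T i j \<and> \<not> T i' j' \<and> T i j' \<and> T i' j) \<or> (T i j \<and> T i' j' \<and> \<not> T i j' \<and> \<not> T i' j))"
    using T unfolding EWtab_def by blast
  have "j \<noteq> j'" using entries by auto
  then consider "j < j'" | "j' < j" by linarith
  then show False
  proof cases
    case 1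
    show False using rect[rule_format, OF ir 1 cells(1,4,2,3)] entries \<open>T i j'\<close> by blast
  next
    case 2
    show False using rect[rule_format, OF ir 2 cells(4,1,3,2)] entries \<open>T i j'\<close> by blast
  qed
qed

text \<open>Induction on the number of rows: a column of \<open>XC\<close> whose only \<open>1\<close>s in \<open>XR\<close> lie in the
  lowest row \<open>r\<close> of \<open>XR\<close> can be traded, by the forbidden pattern, for the column where
  \<open>r\<close> has its \<open>0\<close>.\<close>

lemma EWtab_no_closed_rows_cols:
  assumes T: "T \<in> EWtab n R"
  shows "finite XR \<Longrightarrow> XR \<subseteq> R \<Longrightarrow>
    \<forall>i\<in>XR. \<exists>j\<in>XC. cell n R i j \<and> \<not> T i j \<Longrightarrow>
    \<forall>j\<in>XC. \<exists>i\<in>XR. cell n R i j \<and> T i j \<Longrightarrow> XR = {}"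
proof (induction "card XR" arbitrary: XR XC rule: less_induct)
  case less
  show ?case
  proof (rule ccontr)
    assume "XR \<noteq> {}"
    define r where "r = Max XR"
    have r: "r \<in> XR" and r_max: "\<And>i. i \<in> XR \<Longrightarrow> i \<le> r"
      using \<open>XR \<noteq> {}\<close> less.prems(1) by (auto simp: r_def)
    define XR' where "XR' = XR - {r}"
    define XC' where "XC' = {j \<in> XC. \<exists>i\<in>XR'. cell n R i j \<and> T i j}"
    obtain j' where j': "j' \<in> XC" "cell n R r j'" "\<not> T r j'" using less.prems(3) r by blast
    have "j' \<in> XC'"
    proof -
      obtain i where "i \<in> XR" "cell n R i j'" "T i j'" using less.prems(4) j'(1) by blast
      with j' show ?thesis by (auto simp: XC'_def XR'_def)
    qed
    have zeros: "\<forall>i\<in>XR'. \<exists>j\<in>XC'. cell n R i j \<and> \<not> T i j"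
    proof
      fix i assume i: "i \<in> XR'"
      then have "i < r" using r_max by (auto simp: XR'_def le_neq_implies_less)
      obtain j where j: "j \<in> XC" "cell n R i j" "\<not> T i j" using less.prems(3) i by (auto simp: XR'_def)
      show "\<exists>j\<in>XC'. cell n R i j \<and> \<not> T i j"
      proof (cases "j \<in> XC'")
        case False
        obtain i2 where i2: "i2 \<in> XR" "cell n R i2 j" "T i2 j" using less.prems(4) j(1) by blast
        with False j(1) have "i2 = r" by (auto simp: XC'_def XR'_def)
        have "i \<in> R" using i less.prems(2) by (auto simp: XR'_def)
        with j'(2) \<open>i < r\<close> have "cell n R i j'" by (auto simp: cell_iff)
        with EWtab_forbidden_pattern[OF T \<open>i < r\<close> j(2)] i2 \<open>i2 = r\<close> j(3) j'
        have "\<not> T i j'" by blast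
        with \<open>j' \<in> XC'\<close> \<open>cell n R i j'\<close> show ?thesis by blast
      qed (use j in blast)
    qed
    have ones: "\<forall>j\<in>XC'. \<exists>i\<in>XR'. cell n R i j \<and> T i j" unfolding XC'_def by blast
    have "card XR' < card XR" unfolding XR'_def by (rule card_Diff1_less[OF less.prems(1) r])
    moreover have "finite XR'" "XR' \<subseteq> R" using less.prems(1,2) by (auto simp: XR'_def)
    ultimately have "XR' = {}" using less.hyps zeros ones by blast
    with \<open>j' \<in> XC'\<close> show False by (simp add: XC'_def)
  qed
qed

text \<open>Invariant of the canonical toppling of \<open>phi_TC n R T\<close>: among the labels toppled in
  blocks \<open>0..k\<close>, \<open>T\<close> compares levels as in \<open>level_tableau\<close>, and untoppled labels count as
  lying above all toppled ones.\<close>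

definition toppling_consistent :: "tableau \<Rightarrow> nat \<Rightarrow> bool" where
  "toppling_consistent T k \<longleftrightarrow> (let c = phi_TC n R T in \<forall>i j. cell n R i j \<longrightarrow>
     (j \<in> toppled_upto c k \<and> i \<notin> toppled_upto c k \<longrightarrow> \<not> T i j) \<and>
     (i \<in> toppled_upto c k \<and> j \<notin> toppled_upto c k \<longrightarrow> T i j) \<and>
     (i \<in> toppled_upto c k \<and> j \<in> toppled_upto c k \<longrightarrow> (T i j \<longleftrightarrow> level c i < level c j)))"

lemma EWtab_row_topples_iff:
  assumes T: "T \<in> EWtab n R" and cons: "toppling_consistent T k"
    and i: "i \<in> {1..n}" "i \<in> R" "i \<notin> toppled_upto (phi_TC n R T) k"
  shows "int (deg n R i) \<le> load (phi_TC n R T) k i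
    \<longleftrightarrow> {j. cell n R i j \<and> \<not> T i j} \<subseteq> toppled_upto (phi_TC n R T) k"
proof -
  let ?c = "phi_TC n R T"
  let ?top = "{j \<in> toppled_upto ?c k. cell n R i j}"
  have "{w \<in> toppled_upto ?c k. adj n R i w} = ?top" using i by (auto simp: adj_row_iff)
  then have load: "load ?c k i = int (row_ones n R T i) + int (card ?top)"
    using load_eq[OF EWtab_stable[OF T] i(1), of k] i by (simp add: phi_TC_def)
  have sub: "?top \<subseteq> {j. cell n R i j \<and> \<not> T i j}"
    using cons i(3) unfolding toppling_consistent_def Let_def by blast
  have "row_zeros n R T i \<le> card ?top \<longleftrightarrow> ?top = {j. cell n R i j \<and> \<not> T i j}"
    using sub card_seteq[OF _ sub] unfolding row_zeros_def by auto
  also have "\<dots> \<longleftrightarrow> {j. cell n R i j \<and> \<not> T i j} \<subseteq> toppled_upto ?c k" using sub by auto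
  finally show ?thesis using load deg_row[OF i(2), of T] by simp
qed

lemma EWtab_col_topples_iff:
  assumes T: "T \<in> EWtab n R" and cons: "toppling_consistent T k"
    and j: "j \<in> {1..n}" "j \<notin> R" "j \<notin> toppled_upto (phi_TC n R T) k"
  shows "int (deg n R j) \<le> load (phi_TC n R T) k j
    \<longleftrightarrow> {i. cell n R i j \<and> T i j} \<subseteq> toppled_upto (phi_TC n R T) k"
proof -
  let ?c = "phi_TC n R T"
  let ?top = "{i \<in> toppled_upto ?c k. cell n R i j}"
  have "{w \<in> toppled_upto ?c k. adj n R j w} = ?top" using j by (auto simp: adj_col_iff)
  then have load: "load ?c k j = int (col_zeros n R T j) + int (card ?top)"
    using load_eq[OF EWtab_stable[OF T] j(1), of k] j by (simp add: phi_TC_def)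
  have sub: "?top \<subseteq> {i. cell n R i j \<and> T i j}"
    using cons j(3) unfolding toppling_consistent_def Let_def by blast
  have "col_ones n R T j \<le> card ?top \<longleftrightarrow> ?top = {i. cell n R i j \<and> T i j}"
    using sub card_seteq[OF _ sub] unfolding col_ones_def by auto
  also have "\<dots> \<longleftrightarrow> {i. cell n R i j \<and> T i j} \<subseteq> toppled_upto ?c k" using sub by auto
  finally show ?thesis using load deg_col[OF j(2), of T] by simp
qed

lemma EWtab_col_block_entry:
  assumes T: "T \<in> EWtab n R" and cons: "toppling_consistent T k"
    and col: "j \<in> canon_block n R (phi_TC n R T) (Suc k)" and c: "cell n R i j"
  shows "T i j \<longleftrightarrow> i \<in> toppled_upto (phi_TC n R T) k"
proof -
  let ?c = "phi_TC n R T"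
  have j: "j \<in> {1..n}" "j \<notin> R" "j \<notin> toppled_upto ?c k"
    using c col canon_block_Suc_disjoint[OF EWtab_stable[OF T]] by (auto simp: cell_iff)
  have "int (deg n R j) \<le> load ?c k j" using col by (simp add: canon_block_Suc)
  then have "{i. cell n R i j \<and> T i j} \<subseteq> toppled_upto ?c k"
    using EWtab_col_topples_iff[OF T cons j] by blast
  with cons c j(3) show ?thesis unfolding toppling_consistent_def Let_def by blast
qed

lemma EWtab_row_block_entry:
  assumes T: "T \<in> EWtab n R" and cons: "toppling_consistent T k"
    and row: "i \<in> canon_block n R (phi_TC n R T) (Suc k)" and c: "cell n R i j"
  shows "T i j \<longleftrightarrow> j \<notin> toppled_upto (phi_TC n R T) k"
proof -
  let ?c = "phi_TC n R T"
  have "i \<notin> toppled_upto ?c k" using row canon_block_Suc_disjoint[OF EWtab_stable[OF T]] by blast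
  moreover have "i \<in> {1..n}" using row canon_block_SucD by blast
  ultimately have i: "i \<in> {1..n}" "i \<in> R" "i \<notin> toppled_upto ?c k" using c by (auto simp: cell_iff)
  have "int (deg n R i) \<le> load ?c k i" using row by (simp add: canon_block_Suc)
  then have "{j. cell n R i j \<and> \<not> T i j} \<subseteq> toppled_upto ?c k"
    using EWtab_row_topples_iff[OF T cons i] by blast
  with cons c i(3) show ?thesis unfolding toppling_consistent_def Let_def by blast
qed

lemma EWtab_toppling_consistent:
  assumes T: "T \<in> EWtab n R"
  shows "toppling_consistent T k"
proof (induction k)
  case 0
  have "T 0 j" if "cell n R 0 j" for j using T that by (simp add: EWtab_def)
  then show ?case
    by (auto simp: toppling_consistent_def toppled_upto_0 cell_iff)
next
  case (Suc k)
  let ?c = "phi_TC n R T"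
  let ?top = "toppled_upto ?c" and ?B = "canon_block n R ?c (Suc k)"
  have st: "stable n R ?c" by (rule EWtab_stable[OF T])
  have new: "v \<notin> ?top k" "level ?c v = Suc k" if "v \<in> ?B" for v
    using that canon_block_Suc_disjoint[OF st] level_eqI[OF st] by blast+
  have old: "level ?c v \<le> k" if "v \<in> ?top k" for v
    using that level_eqI[OF st] by (auto simp: toppled_upto_def)
  show ?case unfolding toppling_consistent_def Let_def
  proof (intro allI impI)
    fix i j assume c: "cell n R i j"
    then have "i \<in> R" "j \<notin> R" by (auto simp: cell_iff)
    then have "i \<notin> ?B \<or> j \<notin> ?B" using canon_block_SucD by blast
    then consider (col) "j \<in> ?B" "i \<notin> ?B" | (row) "i \<in> ?B" "j \<notin> ?B" | (neither) "i \<notin> ?B" "j \<notin> ?B"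
      by blast
    then show "(j \<in> ?top (Suc k) \<and> i \<notin> ?top (Suc k) \<longrightarrow> \<not> T i j) \<and>
        (i \<in> ?top (Suc k) \<and> j \<notin> ?top (Suc k) \<longrightarrow> T i j) \<and>
        (i \<in> ?top (Suc k) \<and> j \<in> ?top (Suc k) \<longrightarrow> (T i j \<longleftrightarrow> level ?c i < level ?c j))"
    proof cases
      case col
      with EWtab_col_block_entry[OF T Suc col(1) c] new[OF col(1)] old[of i] show ?thesis
        by (auto simp: toppled_upto_Suc)
    next
      case row
      with EWtab_row_block_entry[OF T Suc row(1) c] new[OF row(1)] old[of j] show ?thesis
        by (auto simp: toppled_upto_Suc)
    next
      case neither
      with Suc c show ?thesis
        unfolding toppling_consistent_def Let_def by (simp add: toppled_upto_Suc)
    qed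
  qed
qed

lemma EWtab_untoppled_row_zero:
  assumes T: "T \<in> EWtab n R" and i: "i \<in> R" "i \<notin> toppled (phi_TC n R T)"
  obtains j where "cell n R i j" "\<not> T i j" "j \<notin> toppled (phi_TC n R T)"
proof -
  let ?c = "phi_TC n R T"
  obtain K where K: "toppled ?c = toppled_upto ?c K" using toppled_eq_toppled_upto by blast
  have "i \<noteq> 0" using i(2) zero_in_toppled by metis
  with i R_subset K have i': "i \<in> {1..n}" "i \<in> R" "i \<notin> toppled_upto ?c K" by auto
  have "load ?c K i < int (deg n R i)"
    using not_toppled_below_deg[OF EWtab_stable[OF T] i'(1) i(2)] load_eq[OF EWtab_stable[OF T] i'(1)] i' K
    by simp
  then show ?thesis
    using EWtab_row_topples_iff[OF T EWtab_toppling_consistent[OF T] i'] that K by auto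
qed

lemma EWtab_untoppled_col_one:
  assumes T: "T \<in> EWtab n R" and j: "j \<in> cols n R" "j \<notin> toppled (phi_TC n R T)"
  obtains i where "cell n R i j" "T i j" "i \<notin> toppled (phi_TC n R T)"
proof -
  let ?c = "phi_TC n R T"
  obtain K where K: "toppled ?c = toppled_upto ?c K" using toppled_eq_toppled_upto by blast
  have "j \<noteq> 0" using j(1) zero_in_R by (metis mem_cols_iff)
  with j K have j': "j \<in> {1..n}" "j \<notin> R" "j \<notin> toppled_upto ?c K" by (auto simp: mem_cols_iff)
  have "load ?c K j < int (deg n R j)"
    using not_toppled_below_deg[OF EWtab_stable[OF T] j'(1) j(2)] load_eq[OF EWtab_stable[OF T] j'(1)] j' K
    by simp
  then show ?thesis
    using EWtab_col_topples_iff[OF T EWtab_toppling_consistent[OF T] j'] that K by auto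
qed

lemma EWtab_toppled:
  assumes T: "T \<in> EWtab n R"
  shows "toppled (phi_TC n R T) = {0..n}"
proof -
  let ?c = "phi_TC n R T"
  define XR where "XR = {i \<in> R. i \<notin> toppled ?c}"
  define XC where "XC = {j \<in> cols n R. j \<notin> toppled ?c}"
  have "\<exists>j\<in>XC. cell n R i j \<and> \<not> T i j" if "i \<in> XR" for i
    using that EWtab_untoppled_row_zero[OF T, of i]
    by (auto simp: XR_def XC_def mem_cols_iff cell_iff)
  moreover have ones: "\<exists>i\<in>XR. cell n R i j \<and> T i j" if "j \<in> XC" for j
    using that EWtab_untoppled_col_one[OF T, of j] by (auto simp: XR_def XC_def cell_iff)
  moreover have "XR \<subseteq> {0..n}" "XR \<subseteq> R" using R_subset by (auto simp: XR_def)
  moreover from this(1) have "finite XR" using finite_subset by auto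
  ultimately have "XR = {}" using EWtab_no_closed_rows_cols[OF T, of XR XC] by blast
  with ones have "XC = {}" by blast
  with \<open>XR = {}\<close> have "v \<in> toppled ?c" if "v \<le> n" for v
    using that by (cases "v \<in> R") (auto simp: XR_def XC_def mem_cols_iff)
  with toppled_subset[of ?c] show ?thesis by auto
qed

lemma EWtab_eq_level_tableau:
  assumes T: "T \<in> EWtab n R"
  shows "T = level_tableau (level (phi_TC n R T))"
proof (intro ext)
  fix i j
  let ?c = "phi_TC n R T"
  obtain K where K: "toppled ?c = toppled_upto ?c K" using toppled_eq_toppled_upto by blast
  have cons: "toppling_consistent T K" by (rule EWtab_toppling_consistent[OF T])
  show "T i j = level_tableau (level ?c) i j"
  proof (cases "cell n R i j")
    case True
    then have "i \<in> toppled_upto ?c K" "j \<in> toppled_upto ?c K"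
      using EWtab_toppled[OF T] K by (auto simp: cell_iff)
    with True cons show ?thesis by (simp add: toppling_consistent_def Let_def level_tableau_def)
  next
    case False
    with T show ?thesis by (auto simp: EWtab_def level_tableau_def)
  qed
qed

lemma EWtab_compatible:
  assumes "T \<in> EWtab n R"
  shows "compatible (level (phi_TC n R T)) (phi_TC n R T)"
  by (rule all_toppled_compatible[OF EWtab_stable[OF assms] EWtab_toppled[OF assms]])

lemma phi_CT_eqI:
  assumes "T \<in> EWtab n R" "phi_TC n R T = m"
  shows "phi_CT n R m = T"
  unfolding phi_CT_def
proof (rule the_equality)
  fix T' assume "T' \<in> EWtab n R \<and> phi_TC n R T' = m"
  with assms show "T' = T" using EWtab_eq_level_tableau by metis
qed (use assms in simp)

section \<open>Cornersupport entries\<close>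

lemma levels_downward_closed:
  assumes lv: "levelling l" and just_below: "\<forall>v\<in>{1..n}. 0 < nbrs_just_below l v"
  shows "v \<le> n \<Longrightarrow> m \<le> l v \<Longrightarrow> \<exists>u\<le>n. l u = m"
proof (induction "l v" arbitrary: v)
  case 0
  then show ?case by auto
next
  case (Suc L)
  show ?case
  proof (cases "m = l v")
    case False
    have "v \<noteq> 0"
    proof
      assume "v = 0"
      with lv have "l v = 0" by (simp add: levelling_def)
      with Suc.hyps(2) show False by simp
    qed
    with Suc.prems(1) just_below obtain u where "u \<le> n" "Suc (l u) = l v"
      using nbr_just_below_exists by (metis atLeastAtMost_iff less_one not_le)
    with Suc False show ?thesis by force
  qed (use Suc.prems in blast)
qed

context
  fixes l
  assumes lv: "levelling l" and just_below: "\<forall>v\<in>{1..n}. 0 < nbrs_just_below l v"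
begin

lemma supp_level_tableau:
  assumes "i \<le> n" "k \<le> n"
  shows "supp n R (level_tableau l) i k \<longleftrightarrow> l i < l k"
proof -
  have "compatible l (phi_TC n R (level_tableau l))"
    using compatible_nbrs_above[OF lv just_below] phi_TC_level_tableau[OF lv] by simp
  with assms show ?thesis by (simp add: supp_def compatible_level_eq)
qed

text \<open>A cornersupport witness is a row and a column whose levels lie strictly between those of
  the cell's row and column; by parity this needs a gap of at least three.\<close>

lemma cornersupport_level_tableau_imp_gap:
  assumes c: "cell n R i j" and cs: "cornersupport n R (level_tableau l) i j"
  shows "l i + 3 \<le> l j \<or> l j + 3 \<le> l i"
proof -
  let ?T = "level_tableau l"
  obtain i' j' where i': "i' \<in> R" and j': "j' \<in> cols n R"
    and S: "supp n R ?T i' j' \<noteq> ?T i j" "supp n R ?T i' j = ?T i j" "supp n R ?T i j' = ?T i j"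
    using cs unfolding cornersupport_def by blast
  have i: "i \<le> n" "i \<in> R" and j: "j \<le> n" "j \<notin> R" and "i' \<le> n" "j' \<le> n"
    using c i' j' R_subset by (auto simp: cell_iff mem_cols_iff)
  with S c have "(l i' < l j') \<noteq> (l i < l j)" "(l i' < l j) = (l i < l j)" "(l i < l j') = (l i < l j)"
    by (auto simp: supp_level_tableau level_tableau_iff)
  moreover have "even (l i)" "odd (l j)" "even (l i')"
    using levelling_parity[OF lv] i j i' \<open>i' \<le> n\<close> by auto
  ultimately show ?thesis by presburger
qed

lemma gap_imp_cornersupport_level_tableau:
  assumes c: "cell n R i j" and gap: "l i + 3 \<le> l j \<or> l j + 3 \<le> l i"
  shows "cornersupport n R (level_tableau l) i j"
proof -
  have i: "i \<le> n" "i \<in> R" and j: "j \<le> n" "j \<notin> R" using c R_subset by (auto simp: cell_iff)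
  have parity: "even (l i)" "odd (l j)" using levelling_parity[OF lv] i j by auto
  from gap consider (up) "l i + 3 \<le> l j" | (down) "l j + 3 \<le> l i" by blast
  then show ?thesis
  proof cases
    case up
    have "l i + 1 \<le> l j" "l i + 2 \<le> l j" using up by linarith+
    then obtain u1 u2 where u: "u1 \<le> n" "l u1 = l i + 1" "u2 \<le> n" "l u2 = l i + 2"
      using levels_downward_closed[OF lv just_below j(1)] by meson
    then have "u1 \<notin> R" "u2 \<in> R" using levelling_parity[OF lv] parity by auto
    with u up c i j show ?thesis unfolding cornersupport_def
      by (intro bexI[of _ u2] bexI[of _ u1]) (auto simp: mem_cols_iff supp_level_tableau level_tableau_iff)
  next
    case down
    have "l j + 1 \<le> l i" "l j + 2 \<le> l i" using down by linarith+
    then obtain u1 u2 where u: "u1 \<le> n" "l u1 = l j + 1" "u2 \<le> n" "l u2 = l j + 2"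
      using levels_downward_closed[OF lv just_below i(1)] by meson
    then have "u1 \<in> R" "u2 \<notin> R" using levelling_parity[OF lv] parity by auto
    with u down c i j show ?thesis unfolding cornersupport_def
      by (intro bexI[of _ u1] bexI[of _ u2]) (auto simp: mem_cols_iff supp_level_tableau level_tableau_iff)
  qed
qed

lemma cornersupport_level_tableau:
  "cell n R i j \<Longrightarrow> cornersupport n R (level_tableau l) i j \<longleftrightarrow> l i + 3 \<le> l j \<or> l j + 3 \<le> l i"
  using cornersupport_level_tableau_imp_gap gap_imp_cornersupport_level_tableau by blast

lemma nu_level_tableau: "nu n R (level_tableau l) j = nbrs_just_below l j"
proof -
  let ?T = "level_tableau l"
  have gap_iff: "l u < l v \<and> \<not> (l u + 3 \<le> l v \<or> l v + 3 \<le> l u) \<longleftrightarrow> Suc (l u) = l v"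
    if "adj n R v u" for u v
    using levelling_adj_parity[OF lv that] by presburger
  show ?thesis
  proof (cases "j \<in> R")
    case True
    have "cell n R j k \<and> \<not> ?T j k \<and> \<not> cornersupport n R ?T j k
        \<longleftrightarrow> k \<le> n \<and> adj n R j k \<and> Suc (l k) = l j" for k
    proof (cases "cell n R j k")
      case c: True
      with True have "adj n R j k" by (simp add: adj_row_iff)
      with c gap_iff[OF this] levelling_adj_neq[OF lv this] show ?thesis
        by (auto simp: cornersupport_level_tableau level_tableau_iff cell_iff)
    qed (use True in \<open>simp add: adj_row_iff\<close>)
    with True show ?thesis by (simp add: nu_def nbrs_just_below_def)
  next
    case False
    have "cell n R i j \<and> ?T i j \<and> \<not> cornersupport n R ?T i j
        \<longleftrightarrow> i \<le> n \<and> adj n R j i \<and> Suc (l i) = l j" for i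
    proof (cases "cell n R i j")
      case c: True
      with False have "adj n R j i" by (simp add: adj_col_iff)
      with c gap_iff[OF this] R_subset show ?thesis
        by (auto simp: cornersupport_level_tableau level_tableau_iff cell_iff)
    qed (use False in \<open>simp add: adj_col_iff\<close>)
    with False show ?thesis by (simp add: nu_def nbrs_just_below_def)
  qed
qed

end

lemma psi_compatible:
  assumes cp: "compatible l x"
  shows "psi n R x = (level_tableau l, \<lambda>i. if i \<in> {1..n} then x i - nbrs_above l i else 0)"
proof -
  have lv: "levelling l" and just_below: "\<forall>v\<in>{1..n}. 0 < nbrs_just_below l v"
    using compatibleD[OF cp] by blast+
  have minrec: "minrec n R x = (\<lambda>i. if i \<in> {1..n} then nbrs_above l i else 0)"
    by (rule minrec_compatible[OF cp])
  have "phi_CT n R (\<lambda>i. if i \<in> {1..n} then nbrs_above l i else 0) = level_tableau l"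
    by (rule phi_CT_eqI[OF level_tableau_EWtab[OF lv just_below] phi_TC_level_tableau[OF lv]])
  then show ?thesis unfolding psi_def minrec by auto
qed

lemma Rec_EW_imp_nu_bound:
  assumes "(T, a) \<in> Rec_EW n R" "j \<in> {1..n}"
  shows "a j < nu n R T j"
proof -
  from assms(1) obtain x where x: "recurrent n R x" and psi: "psi n R x = (T, a)"
    by (auto simp: Rec_EW_def Rec_def)
  have st: "stable n R x" using x by (simp add: recurrent_def)
  have cp: "compatible (level x) x"
    by (rule all_toppled_compatible[OF st recurrent_toppled[OF x]])
  have lv: "levelling (level x)" and just_below: "\<forall>v\<in>{1..n}. 0 < nbrs_just_below (level x) v"
    using compatibleD[OF cp] by blast+
  from psi psi_compatible[OF cp] assms(2)
  have "T = level_tableau (level x)" "a j = x j - nbrs_above (level x) j" by auto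
  moreover have "nbrs_above (level x) j \<le> x j" "x j < nbrs_above (level x) j + nbrs_just_below (level x) j"
    using cp assms(2) by (auto simp: compatible_def)
  ultimately show ?thesis using nu_level_tableau[OF lv just_below] by simp
qed

lemma nu_bound_imp_Rec_EW:
  assumes D: "(T, a) \<in> DecEWtab n R" and bound: "\<forall>j\<in>{1..n}. a j < nu n R T j"
  shows "(T, a) \<in> Rec_EW n R"
proof -
  have T: "T \<in> EWtab n R" and a0: "\<forall>i. i \<notin> {1..n} \<longrightarrow> a i = 0"
    using D by (auto simp: DecEWtab_def)
  define l where "l = level (phi_TC n R T)"
  have cp: "compatible l (phi_TC n R T)" unfolding l_def by (rule EWtab_compatible[OF T])
  have lv: "levelling l" and just_below: "\<forall>v\<in>{1..n}. 0 < nbrs_just_below l v"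
    using compatibleD[OF cp] by blast+
  have T_eq: "T = level_tableau l" unfolding l_def by (rule EWtab_eq_level_tableau[OF T])
  define x where "x u = (if u \<in> {1..n} then nbrs_above l u + a u else 0)" for u
  have "compatible l x"
    using lv bound nu_level_tableau[OF lv just_below] T_eq by (auto simp: compatible_def x_def)
  then have "recurrent n R x" "psi n R x = (T, a)"
    using compatible_recurrent psi_compatible T_eq a0 by (auto simp: x_def)
  then show ?thesis unfolding Rec_EW_def Rec_def by (metis imageI mem_Collect_eq)
qed

end

theorem theorem4p12:
  fixes n :: nat and R :: "nat set" and T :: tableau and a :: "nat \<Rightarrow> nat"
  assumes "ferrers n R"
    and "(T, a) \<in> DecEWtab n R"
  shows "(T, a) \<in> Rec_EW n R \<longleftrightarrow> (\<forall>j\<in>{1..n}. a j < nu n R T j)"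
proof -
  interpret ferrers_graph n R by (rule ferrers_graph.intro) (rule assms(1))
  show ?thesis using Rec_EW_imp_nu_bound nu_bound_imp_Rec_EW[OF assms(2)] by blast
qed

end
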